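(* Suppose Assumptions (NC) and (B) hold and let $\hat h,\hat q$ be the estimators without stabilizers defined in the context. (1) Suppose $\mathbb H\cap\mathbb H_0^{\mathrm{obs}}\ne\emptyset$, take $h_0\in\mathbb H\cap\mathbb H_0^{\mathrm{obs}}$, and assume $P_z(\mathbb H-h_0)\subseteq\mathbb Q'$ and $\mathbb Q'$ is symmetric. Then $$\|P_z(\hat h-h_0)\|_2\le2\sqrt{\sup_{q\in\mathbb Q',h\in\mathbb H}|(\mathbb E-\mathbb E_n)[(Y-h)q]|}.$$ (2) Suppose $\mathbb Q\cap\mathbb Q_0^{\mathrm{obs}}\ne\emptyset$, take $q_0\in\mathbb Q\cap\mathbb Q_0^{\mathrm{obs}}$, and assume $\pi P_w(\mathbb Q-q_0)\subseteq\mathbb H'$ and $\mathbb H'$ is symmetric. Then $$\|\pi P_w(\hat q-q_0)\|_2\le2\sqrt{\sup_{q\in\mathbb Q,h\in\mathbb H'}|(\mathbb E-\mathbb E_n)[-q\pi h+\mathcal T h]|}.$$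
   Context: Setup: random variables $(U,X,A,Z,W,Y)$ with $X$ observed covariates, $A\in\mathcal A$ an action ($\mathcal A$ carries a base measure $\mu$), $Z$ a negative control action, $W$ a negative control outcome, $Y$ real outcome, $U$ an unobserved confounder; the data are $n$ i.i.d. copies of $O=(Y,W,Z,A,X)$; $\mathbb E$ is population expectation, $\mathbb E_n$ the empirical average, $\|\cdot\|_2$ the population $L_2$ norm. Potential outcomes $Y(a),Y(a,z),W(a,z)$. $\pi(a\mid x)$ is a given real contrast function. $f(a\mid u,x)$, $f(a\mid w,x)$ are the conditional densities w.r.t. $\mu$ of $A$ given $(U,X)$ and given $(W,X)$. Assumption (NC): (i) $Y=Y(A,Z)$, $W=W(A,Z)$; (ii) $Y(a,z)=Y(a)$; (iii) $W(a,z)=W$; (iv) $(Z,A)\perp(Y(a),W)\mid(U,X)$ for all $a$; (v) $|\pi(a\mid x)/f(a\mid x,u)|<\infty$ for all $a,x,u$. Bridge sets: $\mathbb H_0=\{h\in L_2(W,A,X):\mathbb E[Y-h\mid A,U,X]=0\}$, $\mathbb Q_0=\{q:\pi q\in L_2(Z,A,X),\ \mathbb E[\pi(A\mid X)(q(Z,A,X)-1/f(A\mid U,X))\mid A,U,X]=0\}$ with $(\pi q)(z,a,x)=\pi(a\mid x)q(z,a,x)$; observed bridge sets $\mathbb H_0^{\mathrm{obs}}=\{h\in L_2(W,A,X):\mathbb E[Y-h(W,A,X)\mid Z,A,X]=0\}$, $\mathbb Q_0^{\mathrm{obs}}=\{q:\pi q\in L_2(Z,A,X),\ \mathbb E[\pi(A\mid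 X)(q(Z,A,X)-1/f(A\mid W,X))\mid W,A,X]=0\}$. Assumption (B): $\mathbb H_0\ne\emptyset$, $\mathbb Q_0\ne\emptyset$. $(\mathcal T h)(w,x)=\int h(w,a,x)\pi(a\mid x)d\mu(a)$. $P_z h=\mathbb E[h(W,A,X)\mid Z,A,X]$, $P_w q=\mathbb E[q(Z,A,X)\mid W,A,X]$, $\pi P_w(q-q_0):=P_w(\pi q-\pi q_0)$; $P_z(\mathbb H-h_0)=\{P_z(h-h_0):h\in\mathbb H\}$, $\pi P_w(\mathbb Q-q_0)=\{\pi P_w(q-q_0):q\in\mathbb Q\}$. A set $S$ is symmetric if $-s\in S$ whenever $s\in S$. Estimators: $\hat h\in\operatorname{argmin}_{h\in\mathbb H}\max_{q\in\mathbb Q'}(\mathbb E_n[q(Z,A,X)(h(W,A,X)-Y)])^2$, $\hat q\in\operatorname{argmin}_{q\in\mathbb Q}\max_{h\in\mathbb H'}(\mathbb E_n[\pi(A\mid X)q(Z,A,X)h(W,A,X)-(\mathcal T h)(W,X)])^2$ (optimizers assumed to exist); $q\pi h$ denotes $\pi(A\mid X)q(Z,A,X)h(W,A,X)$. *)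

theory Defs
  imports "HOL-Probability.Probability"
begin

definition gen :: "'o measure \<Rightarrow> 'v measure \<Rightarrow> ('o \<Rightarrow> 'v) \<Rightarrow> 'o measure" where
  "gen M N V = vimage_algebra (space M) V N"

definition condE :: "'o measure \<Rightarrow> 'v measure \<Rightarrow> ('o \<Rightarrow> 'v) \<Rightarrow> ('o \<Rightarrow> real) \<Rightarrow> 'o \<Rightarrow> real" where
  "condE M N V f = real_cond_exp M (gen M N V) f"

definition L2fun :: "'o measure \<Rightarrow> 'v measure \<Rightarrow> ('o \<Rightarrow> 'v) \<Rightarrow> ('v \<Rightarrow> real) \<Rightarrow> bool" where
  "L2fun M N V g \<longleftrightarrow> g \<in> borel_measurable N \<and> integrable M (\<lambda>\<omega>. (g (V \<omega>))\<^sup>2)"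

definition l2norm :: "'o measure \<Rightarrow> ('o \<Rightarrow> real) \<Rightarrow> real" where
  "l2norm M g = sqrt (\<integral>\<omega>. (g \<omega>)\<^sup>2 \<partial>M)"

definition cond_indep :: "'o measure \<Rightarrow> 'o measure \<Rightarrow> 'o measure \<Rightarrow> 'o measure \<Rightarrow> bool" where
  "cond_indep M F1 F2 G \<longleftrightarrow>
     (\<forall>E1\<in>sets F1. \<forall>E2\<in>sets F2. AE \<omega> in M.
        real_cond_exp M G (indicator (E1 \<inter> E2)) \<omega>
          = real_cond_exp M G (indicator E1) \<omega> * real_cond_exp M G (indicator E2) \<omega>)"

definition cond_density :: "'o measure \<Rightarrow> 'a measure \<Rightarrow> ('o \<Rightarrow> 'a) \<Rightarrow> 'v measure \<Rightarrow> ('o \<Rightarrow> 'v)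
     \<Rightarrow> ('a \<Rightarrow> 'v \<Rightarrow> real) \<Rightarrow> bool" where
  "cond_density M \<mu> A N V f \<longleftrightarrow>
     (\<lambda>(a, v). f a v) \<in> borel_measurable (\<mu> \<Otimes>\<^sub>M N) \<and> (\<forall>a v. 0 \<le> f a v) \<and>
     (\<forall>B\<in>sets \<mu>. AE \<omega> in M.
        condE M N V (indicator (A -` B \<inter> space M)) \<omega> = (LINT a:B|\<mu>. f a (V \<omega>)))"

definition emp_mean :: "'d list \<Rightarrow> ('d \<Rightarrow> real) \<Rightarrow> real" where
  "emp_mean D g = (\<Sum>d\<leftarrow>D. g d) / real (length D)"

definition Top :: "'a measure \<Rightarrow> ('a \<Rightarrow> 'x \<Rightarrow> real) \<Rightarrow> ('w \<Rightarrow> 'a \<Rightarrow> 'x \<Rightarrow> real) \<Rightarrow> 'w \<Rightarrow> 'x \<Rightarrow> real" where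
  "Top \<mu> \<pi> h w x = (\<integral>a. h w a x * \<pi> a x \<partial>\<mu>)"

definition H0 :: "'o measure \<Rightarrow> 'w measure \<Rightarrow> 'a measure \<Rightarrow> 'u measure \<Rightarrow> 'x measure
   \<Rightarrow> ('o \<Rightarrow> real) \<Rightarrow> ('o \<Rightarrow> 'w) \<Rightarrow> ('o \<Rightarrow> 'a) \<Rightarrow> ('o \<Rightarrow> 'u) \<Rightarrow> ('o \<Rightarrow> 'x)
   \<Rightarrow> ('w \<Rightarrow> 'a \<Rightarrow> 'x \<Rightarrow> real) set" where
  "H0 M MW \<mu> MU MX Y W A U X = {h.
     L2fun M (MW \<Otimes>\<^sub>M \<mu> \<Otimes>\<^sub>M MX) (\<lambda>\<omega>. (W \<omega>, A \<omega>, X \<omega>)) (\<lambda>(w, a, x). h w a x) \<and>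
     (AE \<omega> in M. condE M (\<mu> \<Otimes>\<^sub>M MU \<Otimes>\<^sub>M MX) (\<lambda>\<omega>. (A \<omega>, U \<omega>, X \<omega>))
        (\<lambda>\<omega>. Y \<omega> - h (W \<omega>) (A \<omega>) (X \<omega>)) \<omega> = 0)}"

definition Q0 :: "'o measure \<Rightarrow> 'z measure \<Rightarrow> 'a measure \<Rightarrow> 'u measure \<Rightarrow> 'x measure
   \<Rightarrow> ('a \<Rightarrow> 'x \<Rightarrow> real) \<Rightarrow> ('a \<Rightarrow> 'u \<times> 'x \<Rightarrow> real)
   \<Rightarrow> ('o \<Rightarrow> 'z) \<Rightarrow> ('o \<Rightarrow> 'a) \<Rightarrow> ('o \<Rightarrow> 'u) \<Rightarrow> ('o \<Rightarrow> 'x)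
   \<Rightarrow> ('z \<Rightarrow> 'a \<Rightarrow> 'x \<Rightarrow> real) set" where
  "Q0 M MZ \<mu> MU MX \<pi> fU Z A U X = {q.
     L2fun M (MZ \<Otimes>\<^sub>M \<mu> \<Otimes>\<^sub>M MX) (\<lambda>\<omega>. (Z \<omega>, A \<omega>, X \<omega>)) (\<lambda>(z, a, x). \<pi> a x * q z a x) \<and>
     (AE \<omega> in M. condE M (\<mu> \<Otimes>\<^sub>M MU \<Otimes>\<^sub>M MX) (\<lambda>\<omega>. (A \<omega>, U \<omega>, X \<omega>))
        (\<lambda>\<omega>. \<pi> (A \<omega>) (X \<omega>) * (q (Z \<omega>) (A \<omega>) (X \<omega>) - 1 / fU (A \<omega>) (U \<omega>, X \<omega>))) \<omega> = 0)}"

definition H0obs :: "'o measure \<Rightarrow> 'w measure \<Rightarrow> 'z measure \<Rightarrow> 'a measure \<Rightarrow> 'x measure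
   \<Rightarrow> ('o \<Rightarrow> real) \<Rightarrow> ('o \<Rightarrow> 'w) \<Rightarrow> ('o \<Rightarrow> 'z) \<Rightarrow> ('o \<Rightarrow> 'a) \<Rightarrow> ('o \<Rightarrow> 'x)
   \<Rightarrow> ('w \<Rightarrow> 'a \<Rightarrow> 'x \<Rightarrow> real) set" where
  "H0obs M MW MZ \<mu> MX Y W Z A X = {h.
     L2fun M (MW \<Otimes>\<^sub>M \<mu> \<Otimes>\<^sub>M MX) (\<lambda>\<omega>. (W \<omega>, A \<omega>, X \<omega>)) (\<lambda>(w, a, x). h w a x) \<and>
     (AE \<omega> in M. condE M (MZ \<Otimes>\<^sub>M \<mu> \<Otimes>\<^sub>M MX) (\<lambda>\<omega>. (Z \<omega>, A \<omega>, X \<omega>))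
        (\<lambda>\<omega>. Y \<omega> - h (W \<omega>) (A \<omega>) (X \<omega>)) \<omega> = 0)}"

definition Q0obs :: "'o measure \<Rightarrow> 'w measure \<Rightarrow> 'z measure \<Rightarrow> 'a measure \<Rightarrow> 'x measure
   \<Rightarrow> ('a \<Rightarrow> 'x \<Rightarrow> real) \<Rightarrow> ('a \<Rightarrow> 'w \<times> 'x \<Rightarrow> real)
   \<Rightarrow> ('o \<Rightarrow> 'w) \<Rightarrow> ('o \<Rightarrow> 'z) \<Rightarrow> ('o \<Rightarrow> 'a) \<Rightarrow> ('o \<Rightarrow> 'x)
   \<Rightarrow> ('z \<Rightarrow> 'a \<Rightarrow> 'x \<Rightarrow> real) set" where
  "Q0obs M MW MZ \<mu> MX \<pi> fW W Z A X = {q.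
     L2fun M (MZ \<Otimes>\<^sub>M \<mu> \<Otimes>\<^sub>M MX) (\<lambda>\<omega>. (Z \<omega>, A \<omega>, X \<omega>)) (\<lambda>(z, a, x). \<pi> a x * q z a x) \<and>
     (AE \<omega> in M. condE M (MW \<Otimes>\<^sub>M \<mu> \<Otimes>\<^sub>M MX) (\<lambda>\<omega>. (W \<omega>, A \<omega>, X \<omega>))
        (\<lambda>\<omega>. \<pi> (A \<omega>) (X \<omega>) * (q (Z \<omega>) (A \<omega>) (X \<omega>) - 1 / fW (A \<omega>) (W \<omega>, X \<omega>))) \<omega> = 0)}"

end

theory Submission
  imports Defs
begin

text \<open>Both bounds come from one argument. The population criterion \<open>e(q, h) = E[(Y - h) q]\<close>
  vanishes at the observed bridge \<open>h\<^sub>0\<close> for every test function \<open>q\<close>. Since \<open>hhat\<close> minimises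
  the worst squared empirical criterion, its empirical criterion is uniformly no larger than
  that of \<open>h\<^sub>0\<close>, which is within the uniform deviation \<open>\<delta>\<close> of zero; hence \<open>|e(q, hhat)| \<le> 2\<delta>\<close>.
  Taking for \<open>q\<close> a version of \<open>P\<^sub>z(hhat - h\<^sub>0)\<close> gives
  \<open>\<parallel>P\<^sub>z(hhat - h\<^sub>0)\<parallel>\<^sup>2 = E[q (hhat - h\<^sub>0)] = -e(q, hhat) \<le> 2\<delta>\<close>.

  For \<open>qhat\<close> the criterion is \<open>E[-q \<pi> h + T h]\<close>. It vanishes at \<open>q\<^sub>0\<close> because
  \<open>E[\<pi> q\<^sub>0 | W, A, X] = \<pi>(A|X) / f(A|W,X)\<close>, and weighting by the inverse density recovers
  \<open>T h\<close> after disintegrating the law of \<open>(A, W, X)\<close> along \<open>f(a|W,X)\<close>. This needs \<open>f(a|W,X) > 0\<close>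
  wherever \<open>\<pi>(a|X) \<noteq> 0\<close>, which follows from (NC)(iv) and (v): by conditional independence the
  same law is also the mixture along \<open>f(a|U,X)\<close>.\<close>

lemma sigma_finite_subalgebra_gen:
  assumes "prob_space M" and "V \<in> M \<rightarrow>\<^sub>M N"
  shows "sigma_finite_subalgebra M (gen M N V)"
proof -
  interpret prob_space M by fact
  have "subalgebra M (gen M N V)"
    unfolding subalgebra_def gen_def using sets_image_in_sets[OF refl assms(2)] by simp
  then have "finite_measure_subalgebra M (gen M N V)"
    by (simp add: finite_measure_subalgebra_def finite_measure_subalgebra_axioms_def finite_measure_axioms)
  then show ?thesis by (rule finite_measure_subalgebra_is_sigma_finite)
qed

lemma measurable_gen_comp:
  assumes V: "V \<in> M \<rightarrow>\<^sub>M N" and g: "g \<in> borel_measurable N"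
  shows "(\<lambda>\<omega>. g (V \<omega>)) \<in> borel_measurable (gen M N V)"
proof -
  have "V \<in> gen M N V \<rightarrow>\<^sub>M N" unfolding gen_def
    by (rule measurable_vimage_algebra1) (use V in \<open>auto dest: measurable_space\<close>)
  then show ?thesis using g by (rule measurable_compose)
qed

lemma vimage_snd_in_gen:
  assumes "\<forall>\<omega>\<in>space M. V1 \<omega> \<in> space N1" and "B \<in> sets N2"
  shows "V2 -` B \<inter> space M \<in> sets (gen M (N1 \<Otimes>\<^sub>M N2) (\<lambda>\<omega>. (V1 \<omega>, V2 \<omega>)))"
proof -
  have "(\<lambda>\<omega>. (V1 \<omega>, V2 \<omega>)) -` (space N1 \<times> B) \<inter> space M = V2 -` B \<inter> space M"
    using assms(1) by auto
  moreover have "space N1 \<times> B \<in> sets (N1 \<Otimes>\<^sub>M N2)" using assms(2) by (intro pair_measureI) auto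
  note in_vimage_algebra[OF this, of "\<lambda>\<omega>. (V1 \<omega>, V2 \<omega>)" "space M"]
  ultimately show ?thesis unfolding gen_def by simp
qed

lemma L2fun_comp:
  assumes "L2fun M N V g" and "V \<in> M \<rightarrow>\<^sub>M N"
  shows "(\<lambda>\<omega>. g (V \<omega>)) \<in> borel_measurable (gen M N V)"
    and "(\<lambda>\<omega>. g (V \<omega>)) \<in> borel_measurable M"
    and "integrable M (\<lambda>\<omega>. (g (V \<omega>))\<^sup>2)"
  using assms measurable_gen_comp measurable_compose[OF assms(2)] unfolding L2fun_def by auto

lemma integrable_mult_of_square_integrable:
  fixes f g :: "'o \<Rightarrow> real"
  assumes "f \<in> borel_measurable M" "g \<in> borel_measurable M"
    and "integrable M (\<lambda>x. (f x)\<^sup>2)" "integrable M (\<lambda>x. (g x)\<^sup>2)"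
  shows "integrable M (\<lambda>x. f x * g x)"
proof (rule Bochner_Integration.integrable_bound)
  show "integrable M (\<lambda>x. (f x)\<^sup>2 + (g x)\<^sup>2)" using assms by auto
  have "\<bar>f x * g x\<bar> \<le> (f x)\<^sup>2 + (g x)\<^sup>2" for x
    using sum_squares_bound[of "\<bar>f x\<bar>" "\<bar>g x\<bar>"] mult_nonneg_nonneg[of "\<bar>f x\<bar>" "\<bar>g x\<bar>"]
    unfolding abs_mult power2_abs by linarith
  then show "AE x in M. norm (f x * g x) \<le> norm ((f x)\<^sup>2 + (g x)\<^sup>2)" by simp
qed (use assms in auto)

lemma pair_measure_eqI_rectangles:
  fixes \<nu> \<nu>' :: "('a \<times> 'b) measure"
  assumes "sets \<nu> = sets (Ma \<Otimes>\<^sub>M Mb)" and "sets \<nu>' = sets (Ma \<Otimes>\<^sub>M Mb)"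
    and "emeasure \<nu> (space Ma \<times> space Mb) \<noteq> \<infinity>"
    and "\<And>B E. B \<in> sets Ma \<Longrightarrow> E \<in> sets Mb \<Longrightarrow> emeasure \<nu> (B \<times> E) = emeasure \<nu>' (B \<times> E)"
  shows "\<nu> = \<nu>'"
proof (rule measure_eqI_generator_eq[OF Int_stable_pair_measure_generator[of Ma Mb],
      where \<Omega>="space Ma \<times> space Mb" and A="\<lambda>i. space Ma \<times> space Mb"])
  show "{a \<times> b |a b. a \<in> sets Ma \<and> b \<in> sets Mb} \<subseteq> Pow (space Ma \<times> space Mb)"
    using sets.space_closed[of Ma] sets.space_closed[of Mb] by auto
qed (use assms in \<open>auto simp: sets_pair_measure\<close>)

context sigma_finite_subalgebra
begin

text \<open>The function \<open>r\<close> need not be integrable, so the argument is localised on the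
  \<open>F\<close>-measurable sets \<open>{\<bar>r\<bar> \<le> n}\<close>.\<close>

lemma real_cond_exp_eq_of_real_cond_exp_diff_eq_0:
  assumes fin: "finite_measure M"
    and p: "integrable M p" and r[measurable]: "r \<in> borel_measurable F"
    and ae: "AE x in M. real_cond_exp M F (\<lambda>x. p x - r x) x = 0"
  shows "AE x in M. real_cond_exp M F p x = r x"
proof -
  interpret finite_measure M by (rule fin)
  have rM[measurable]: "r \<in> borel_measurable M" by (rule measurable_from_subalg[OF subalg r])
  have pM[measurable]: "p \<in> borel_measurable M" using p by auto
  define t :: "nat \<Rightarrow> 'a \<Rightarrow> real" where "t n = indicator {x \<in> space M. \<bar>r x\<bar> \<le> real n}" for n
  have tF[measurable]: "t n \<in> borel_measurable F" for n
  proof -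
    have "{x \<in> space M. \<bar>r x\<bar> \<le> real n} = {x \<in> space F. \<bar>r x\<bar> \<le> real n}"
      using subalg unfolding subalgebra_def by simp
    also have "\<dots> \<in> sets F" by measurable
    finally show ?thesis unfolding t_def by simp
  qed
  have tM[measurable]: "t n \<in> borel_measurable M" for n by (rule measurable_from_subalg[OF subalg tF])
  have intp: "integrable M (\<lambda>x. t n x * p x)" for n
    by (rule Bochner_Integration.integrable_bound[OF p]) (auto simp: t_def indicator_def)
  have intr: "integrable M (\<lambda>x. t n x * r x)" for n
    by (rule integrable_const_bound[where B="real n"]) (auto simp: t_def indicator_def)
  have "AE x in M. t n x * (real_cond_exp M F p x - r x) = 0" for n
  proof -
    have "AE x in M. real_cond_exp M F (\<lambda>x. t n x * (p x - r x)) x = t n x * real_cond_exp M F (\<lambda>x. p x - r x) x"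
      using Bochner_Integration.integrable_diff[OF intp intr]
      by (intro real_cond_exp_mult) (auto simp: algebra_simps)
    moreover have "AE x in M. real_cond_exp M F (\<lambda>x. t n x * p x - t n x * r x) x
        = real_cond_exp M F (\<lambda>x. t n x * p x) x - real_cond_exp M F (\<lambda>x. t n x * r x) x"
      by (rule real_cond_exp_diff[OF intp intr])
    moreover have "AE x in M. real_cond_exp M F (\<lambda>x. t n x * p x) x = t n x * real_cond_exp M F p x"
      by (rule real_cond_exp_mult) (use intp in auto)
    moreover have "AE x in M. real_cond_exp M F (\<lambda>x. t n x * r x) x = t n x * r x"
      by (rule real_cond_exp_F_meas[OF intr]) simp
    ultimately show ?thesis using ae by eventually_elim (simp add: algebra_simps)
  qed
  then have "AE x in M. \<forall>n. t n x * (real_cond_exp M F p x - r x) = 0"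
    unfolding AE_all_countable by blast
  then show ?thesis
  proof (rule AE_mp[OF _ AE_I2], intro impI)
    fix x assume x: "x \<in> space M" and h: "\<forall>n. t n x * (real_cond_exp M F p x - r x) = 0"
    obtain n :: nat where "\<bar>r x\<bar> \<le> real n" using real_arch_simple by blast
    then have "t n x = 1" using x by (simp add: t_def)
    then show "real_cond_exp M F p x = r x" using h[rule_format, of n] by simp
  qed
qed

lemma l2norm_real_cond_exp_le:
  assumes q: "q \<in> borel_measurable F" and f: "f \<in> borel_measurable M"
    and int: "integrable M (\<lambda>x. q x * f x)"
    and version: "AE x in M. q x = real_cond_exp M F f x"
    and bound: "(\<integral>x. q x * f x \<partial>M) \<le> 2 * \<delta>"
  shows "l2norm M (real_cond_exp M F f) \<le> 2 * sqrt \<delta>"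
proof -
  have qM: "q \<in> borel_measurable M" by (rule measurable_from_subalg[OF subalg q])
  have "(\<integral>x. (real_cond_exp M F f x)\<^sup>2 \<partial>M) = (\<integral>x. q x * real_cond_exp M F f x \<partial>M)"
    by (rule integral_cong_AE) (use qM version in \<open>auto simp: power2_eq_square\<close>)
  also have "\<dots> = (\<integral>x. q x * f x \<partial>M)"
    by (rule real_cond_exp_intg(2)[OF int q f])
  finally have sq: "(\<integral>x. (real_cond_exp M F f x)\<^sup>2 \<partial>M) \<le> 2 * \<delta>" using bound by simp
  moreover have "0 \<le> (\<integral>x. (real_cond_exp M F f x)\<^sup>2 \<partial>M)" by (rule integral_nonneg_AE) simp
  ultimately have "0 \<le> \<delta>" by linarith
  have "l2norm M (real_cond_exp M F f) \<le> sqrt (4 * \<delta>)"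
    unfolding l2norm_def using sq \<open>0 \<le> \<delta>\<close> by simp
  also have "\<dots> = 2 * sqrt \<delta>" by (simp add: real_sqrt_mult)
  finally show ?thesis .
qed

end

lemma emp_mean_uminus: "emp_mean D (\<lambda>d. - f d) = - emp_mean D f"
proof -
  have "(\<Sum>d\<leftarrow>D. - f d) = - (\<Sum>d\<leftarrow>D. f d)" by (induction D) auto
  then show ?thesis unfolding emp_mean_def by simp
qed

text \<open>Here \<open>e\<close> is a population criterion, \<open>n\<close> its empirical counterpart, and \<open>\<Delta>\<close> collects
  their deviations.\<close>

lemma minimax_deviation_bound:
  fixes e n :: "'s \<Rightarrow> 't \<Rightarrow> real" and \<Delta> :: "real set"
  assumes bdd: "bdd_above \<Delta>"
    and dev: "\<And>s t. s \<in> S \<Longrightarrow> t \<in> T \<Longrightarrow> \<bar>e s t - n s t\<bar> \<in> \<Delta>"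
    and t0: "t0 \<in> T" and t: "t \<in> T" and s: "s \<in> S"
    and moment: "\<And>s. s \<in> S \<Longrightarrow> e s t0 = 0"
    and minimiser: "(SUP s\<in>S. ereal ((n s t)\<^sup>2)) \<le> (SUP s\<in>S. ereal ((n s t0)\<^sup>2))"
  shows "\<bar>e s t\<bar> \<le> 2 * Sup \<Delta>"
proof -
  have le: "\<bar>e s t - n s t\<bar> \<le> Sup \<Delta>" if "s \<in> S" "t \<in> T" for s t
    by (rule cSup_upper[OF dev[OF that] bdd])
  have d0: "0 \<le> Sup \<Delta>" using le[OF s t] by linarith
  have "(n s t0)\<^sup>2 \<le> (Sup \<Delta>)\<^sup>2" if "s \<in> S" for s
    using le[OF that t0] moment[OF that] power_mono[of "\<bar>n s t0\<bar>" "Sup \<Delta>" 2] by simp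
  then have "(SUP s\<in>S. ereal ((n s t0)\<^sup>2)) \<le> ereal ((Sup \<Delta>)\<^sup>2)"
    by (intro SUP_least) simp
  moreover have "ereal ((n s t)\<^sup>2) \<le> (SUP s\<in>S. ereal ((n s t)\<^sup>2))"
    using s by (rule SUP_upper)
  ultimately have "(n s t)\<^sup>2 \<le> (Sup \<Delta>)\<^sup>2" using minimiser by (meson ereal_less_eq(3) order_trans)
  then have "\<bar>n s t\<bar> \<le> Sup \<Delta>" using d0 power2_le_imp_le[of "\<bar>n s t\<bar>" "Sup \<Delta>"] by simp
  then show ?thesis using le[OF s t] by linarith
qed


lemma hhat_projected_error_bound:
  fixes M :: "'o measure" and \<mu> :: "'a measure"
    and MW :: "'w measure" and MZ :: "'z measure" and MX :: "'x measure"
    and Y :: "'o \<Rightarrow> real" and W :: "'o \<Rightarrow> 'w" and Z :: "'o \<Rightarrow> 'z" and A :: "'o \<Rightarrow> 'a"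
    and X :: "'o \<Rightarrow> 'x"
    and D :: "(real \<times> 'w \<times> 'z \<times> 'a \<times> 'x) list"
    and HH :: "('w \<Rightarrow> 'a \<Rightarrow> 'x \<Rightarrow> real) set"
    and QQ' :: "('z \<Rightarrow> 'a \<Rightarrow> 'x \<Rightarrow> real) set"
  assumes M: "prob_space M"
    and measY: "Y \<in> borel_measurable M" and measW: "W \<in> M \<rightarrow>\<^sub>M MW"
    and measZ: "Z \<in> M \<rightarrow>\<^sub>M MZ" and measA: "A \<in> M \<rightarrow>\<^sub>M \<mu>" and measX: "X \<in> M \<rightarrow>\<^sub>M MX"
    and Y_L2: "integrable M (\<lambda>\<omega>. (Y \<omega>)\<^sup>2)"
    and HH_L2: "\<forall>h\<in>HH. L2fun M (MW \<Otimes>\<^sub>M \<mu> \<Otimes>\<^sub>M MX) (\<lambda>\<omega>. (W \<omega>, A \<omega>, X \<omega>)) (\<lambda>(w, a, x). h w a x)"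
    and QQ'_L2: "\<forall>q\<in>QQ'. L2fun M (MZ \<Otimes>\<^sub>M \<mu> \<Otimes>\<^sub>M MX) (\<lambda>\<omega>. (Z \<omega>, A \<omega>, X \<omega>)) (\<lambda>(z, a, x). q z a x)"
    and hhat: "hhat \<in> HH \<and> (\<forall>h\<in>HH.
       (SUP q\<in>QQ'. ereal ((emp_mean D (\<lambda>(y, w, z, a, x). q z a x * (hhat w a x - y)))\<^sup>2))
         \<le> (SUP q\<in>QQ'. ereal ((emp_mean D (\<lambda>(y, w, z, a, x). q z a x * (h w a x - y)))\<^sup>2)))"
    and h0: "h0 \<in> HH \<inter> H0obs M MW MZ \<mu> MX Y W Z A X"
    and proj: "\<forall>h\<in>HH. \<exists>q\<in>QQ'. AE \<omega> in M. q (Z \<omega>) (A \<omega>) (X \<omega>) =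
            condE M (MZ \<Otimes>\<^sub>M \<mu> \<Otimes>\<^sub>M MX) (\<lambda>\<omega>. (Z \<omega>, A \<omega>, X \<omega>))
              (\<lambda>\<omega>. h (W \<omega>) (A \<omega>) (X \<omega>) - h0 (W \<omega>) (A \<omega>) (X \<omega>)) \<omega>"
    and bdd: "bdd_above {\<bar>(\<integral>\<omega>. (Y \<omega> - h (W \<omega>) (A \<omega>) (X \<omega>)) * q (Z \<omega>) (A \<omega>) (X \<omega>) \<partial>M)
                   - emp_mean D (\<lambda>(y, w, z, a, x). (y - h w a x) * q z a x)\<bar> | q h. q \<in> QQ' \<and> h \<in> HH}"
  shows "l2norm M (condE M (MZ \<Otimes>\<^sub>M \<mu> \<Otimes>\<^sub>M MX) (\<lambda>\<omega>. (Z \<omega>, A \<omega>, X \<omega>))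
              (\<lambda>\<omega>. hhat (W \<omega>) (A \<omega>) (X \<omega>) - h0 (W \<omega>) (A \<omega>) (X \<omega>)))
         \<le> 2 * sqrt (Sup {\<bar>(\<integral>\<omega>. (Y \<omega> - h (W \<omega>) (A \<omega>) (X \<omega>)) * q (Z \<omega>) (A \<omega>) (X \<omega>) \<partial>M)
                   - emp_mean D (\<lambda>(y, w, z, a, x). (y - h w a x) * q z a x)\<bar> | q h. q \<in> QQ' \<and> h \<in> HH})"
    (is "_ \<le> 2 * sqrt (Sup ?\<Delta>)")
proof -
  let ?V = "\<lambda>\<omega>. (Z \<omega>, A \<omega>, X \<omega>)"
  let ?F = "gen M (MZ \<Otimes>\<^sub>M \<mu> \<Otimes>\<^sub>M MX) ?V"
  have measV: "?V \<in> M \<rightarrow>\<^sub>M MZ \<Otimes>\<^sub>M \<mu> \<Otimes>\<^sub>M MX" using measZ measA measX by measurable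
  have measWAX: "(\<lambda>\<omega>. (W \<omega>, A \<omega>, X \<omega>)) \<in> M \<rightarrow>\<^sub>M MW \<Otimes>\<^sub>M \<mu> \<Otimes>\<^sub>M MX"
    using measW measA measX by measurable
  interpret F: sigma_finite_subalgebra M ?F by (rule sigma_finite_subalgebra_gen[OF M measV])
  define hV where "hV h = (\<lambda>\<omega>. h (W \<omega>) (A \<omega>) (X \<omega>))" for h :: "'w \<Rightarrow> 'a \<Rightarrow> 'x \<Rightarrow> real"
  define qV where "qV q = (\<lambda>\<omega>. q (Z \<omega>) (A \<omega>) (X \<omega>))" for q :: "'z \<Rightarrow> 'a \<Rightarrow> 'x \<Rightarrow> real"
  define e where "e q h = (\<integral>\<omega>. (Y \<omega> - h (W \<omega>) (A \<omega>) (X \<omega>)) * q (Z \<omega>) (A \<omega>) (X \<omega>) \<partial>M)" for q h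
  define n where "n q h = emp_mean D (\<lambda>(y, w, z, a, x). (y - h w a x) * q z a x)" for q h
  have hL: "hV h \<in> borel_measurable M" "integrable M (\<lambda>\<omega>. (hV h \<omega>)\<^sup>2)" if "h \<in> HH" for h
    using L2fun_comp(2,3)[OF _ measWAX] HH_L2 that unfolding hV_def by fastforce+
  have qL: "qV q \<in> borel_measurable ?F" "qV q \<in> borel_measurable M" "integrable M (\<lambda>\<omega>. (qV q \<omega>)\<^sup>2)"
    if "q \<in> QQ'" for q
    using L2fun_comp[OF _ measV] QQ'_L2 that unfolding qV_def by fastforce+
  have int: "integrable M (\<lambda>\<omega>. qV q \<omega> * (Y \<omega> - hV h \<omega>))" if "q \<in> QQ'" "h \<in> HH" for q h
    using integrable_mult_of_square_integrable[of "qV q" M] qL[OF that(1)] hL[OF that(2)] measY Y_L2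
    by (simp add: right_diff_distrib)
  have e_eq: "e q h = (\<integral>\<omega>. qV q \<omega> * (Y \<omega> - hV h \<omega>) \<partial>M)" for q h
    unfolding e_def qV_def hV_def by (simp add: mult.commute)
  have h0HH: "h0 \<in> HH" and hhatHH: "hhat \<in> HH" using h0 hhat by auto
  have moment: "e q h0 = 0" if "q \<in> QQ'" for q
  proof -
    have "AE \<omega> in M. real_cond_exp M ?F (\<lambda>\<omega>. Y \<omega> - hV h0 \<omega>) \<omega> = 0"
      using h0 unfolding H0obs_def condE_def hV_def by blast
    then have "(\<integral>\<omega>. qV q \<omega> * real_cond_exp M ?F (\<lambda>\<omega>. Y \<omega> - hV h0 \<omega>) \<omega> \<partial>M) = (\<integral>\<omega>. 0 \<partial>M)"
      by (intro integral_cong_AE) (use qL[OF that] in auto)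
    then show ?thesis
      unfolding e_eq using F.real_cond_exp_intg(2)[OF int[OF that h0HH]] qL[OF that] hL[OF h0HH] measY
      by simp
  qed
  obtain qs where qs: "qs \<in> QQ'" and version: "AE \<omega> in M. qV qs \<omega> =
      real_cond_exp M ?F (\<lambda>\<omega>. hV hhat \<omega> - hV h0 \<omega>) \<omega>"
    using proj hhatHH unfolding condE_def qV_def hV_def by blast
  have "n q h = - emp_mean D (\<lambda>(y, w, z, a, x). q z a x * (h w a x - y))" for q h
    unfolding n_def emp_mean_uminus[symmetric] by (simp add: case_prod_beta' algebra_simps)
  then have "(SUP q\<in>QQ'. ereal ((n q hhat)\<^sup>2)) \<le> (SUP q\<in>QQ'. ereal ((n q h0)\<^sup>2))"
    using hhat h0HH by simp
  moreover have "\<bar>e q h - n q h\<bar> \<in> ?\<Delta>" if "q \<in> QQ'" "h \<in> HH" for q h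
    unfolding e_def n_def using that by blast
  ultimately have dev: "\<bar>e qs hhat\<bar> \<le> 2 * Sup ?\<Delta>"
    using minimax_deviation_bound[where e=e and n=n, OF bdd _ h0HH hhatHH qs moment] by blast
  have int_diff: "integrable M (\<lambda>\<omega>. qV qs \<omega> * (hV hhat \<omega> - hV h0 \<omega>))"
    using Bochner_Integration.integrable_diff[OF int[OF qs h0HH] int[OF qs hhatHH]]
    by (simp add: algebra_simps)
  have "(\<integral>\<omega>. qV qs \<omega> * (hV hhat \<omega> - hV h0 \<omega>) \<partial>M) = e qs h0 - e qs hhat"
    unfolding e_eq using Bochner_Integration.integral_diff[OF int[OF qs h0HH] int[OF qs hhatHH]]
    by (simp add: algebra_simps)
  also have "\<dots> \<le> 2 * Sup ?\<Delta>" using moment[OF qs] dev by linarith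
  finally have "l2norm M (real_cond_exp M ?F (\<lambda>\<omega>. hV hhat \<omega> - hV h0 \<omega>)) \<le> 2 * sqrt (Sup ?\<Delta>)"
    by (intro F.l2norm_real_cond_exp_le[OF qL(1)[OF qs] _ int_diff version])
      (use hL[OF h0HH] hL[OF hhatHH] in auto)
  then show ?thesis by (simp add: condE_def hV_def)
qed

lemma borel_measurable_case_prod_comp:
  assumes "(\<lambda>(u, v). f u v) \<in> borel_measurable (Mu \<Otimes>\<^sub>M Mv)"
    and "g1 \<in> N \<rightarrow>\<^sub>M Mu" and "g2 \<in> N \<rightarrow>\<^sub>M Mv"
  shows "(\<lambda>x. f (g1 x) (g2 x)) \<in> borel_measurable N"
  using measurable_compose[OF measurable_Pair[OF assms(2,3)] assms(1)] by simp

lemma borel_measurable_case_prod3_comp: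
  assumes "(\<lambda>(u, v, w). f u v w) \<in> borel_measurable (Mu \<Otimes>\<^sub>M Mv \<Otimes>\<^sub>M Mw)"
    and "g1 \<in> N \<rightarrow>\<^sub>M Mu" and "g2 \<in> N \<rightarrow>\<^sub>M Mv" and "g3 \<in> N \<rightarrow>\<^sub>M Mw"
  shows "(\<lambda>x. f (g1 x) (g2 x) (g3 x)) \<in> borel_measurable N"
  using measurable_compose[OF measurable_Pair[OF assms(2) measurable_Pair[OF assms(3,4)]] assms(1)]
  by simp

lemma cond_density_integrable:
  assumes M: "prob_space M" and measA: "A \<in> M \<rightarrow>\<^sub>M \<mu>" and measV: "V \<in> M \<rightarrow>\<^sub>M N"
    and cd: "cond_density M \<mu> A N V f"
  shows "AE \<omega> in M. integrable \<mu> (\<lambda>a. f a (V \<omega>))"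
proof -
  interpret F: sigma_finite_subalgebra M "gen M N V" by (rule sigma_finite_subalgebra_gen[OF M measV])
  interpret P: prob_space M by (rule M)
  have sp: "A -` space \<mu> \<inter> space M = space M" using measA by (auto dest: measurable_space)
  have "indicator (space M) \<in> borel_measurable (gen M N V)"
    by (metis borel_measurable_indicator sets.top space_vimage_algebra gen_def)
  then have "AE \<omega> in M. condE M N V (indicator (space M)) \<omega> = indicator (space M) \<omega>"
    unfolding condE_def by (intro F.real_cond_exp_F_meas P.integrable_const_bound[where B=1]) auto
  moreover have "AE \<omega> in M. condE M N V (indicator (A -` space \<mu> \<inter> space M)) \<omega> = (LINT a:space \<mu>|\<mu>. f a (V \<omega>))"
    using cd unfolding cond_density_def by blast
  ultimately have "AE \<omega> in M. (LINT a:space \<mu>|\<mu>. f a (V \<omega>)) = 1"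
    using AE_space by eventually_elim (simp add: sp)
  moreover have "(LINT a:space \<mu>|\<mu>. f a (V \<omega>)) = (\<integral>a. f a (V \<omega>) \<partial>\<mu>)" for \<omega>
    unfolding set_lebesgue_integral_def by (rule Bochner_Integration.integral_cong) (auto simp: indicator_def)
  ultimately have "AE \<omega> in M. (\<integral>a. f a (V \<omega>) \<partial>\<mu>) = 1" by simp
  then show ?thesis by eventually_elim (use not_integrable_integral_eq in fastforce)
qed

lemma cond_density_cond_exp_indicator:
  assumes M: "prob_space M" and measA: "A \<in> M \<rightarrow>\<^sub>M \<mu>" and measV: "V \<in> M \<rightarrow>\<^sub>M N"
    and cd: "cond_density M \<mu> A N V f" and B: "B \<in> sets \<mu>"
  shows "AE \<omega> in M. 0 \<le> condE M N V (indicator (A -` B \<inter> space M)) \<omega> \<and>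
     ennreal (condE M N V (indicator (A -` B \<inter> space M)) \<omega>) = (\<integral>\<^sup>+a. ennreal (indicator B a * f a (V \<omega>)) \<partial>\<mu>)"
proof -
  have pos: "\<And>a v. 0 \<le> f a v" using cd unfolding cond_density_def by blast
  have "AE \<omega> in M. condE M N V (indicator (A -` B \<inter> space M)) \<omega> = (LINT a:B|\<mu>. f a (V \<omega>))"
    using cd B unfolding cond_density_def by blast
  with cond_density_integrable[OF M measA measV cd] show ?thesis
  proof (eventually_elim)
    case (elim \<omega>)
    have int: "integrable \<mu> (\<lambda>a. indicator B a * f a (V \<omega>))"
      using integrable_mult_indicator[OF B, of "\<lambda>a. f a (V \<omega>)"] elim by simp
    have "(\<integral>\<^sup>+a. ennreal (indicator B a * f a (V \<omega>)) \<partial>\<mu>) = ennreal (\<integral>a. indicator B a * f a (V \<omega>) \<partial>\<mu>)"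
      by (rule nn_integral_eq_integral[OF int]) (simp add: pos)
    moreover have "0 \<le> (\<integral>a. indicator B a * f a (V \<omega>) \<partial>\<mu>)"
      by (rule integral_nonneg_AE) (simp add: pos)
    ultimately show ?case using elim by (simp add: set_lebesgue_integral_def)
  qed
qed

lemma nn_integral_cond_density:
  assumes M: "prob_space M" and measA: "A \<in> M \<rightarrow>\<^sub>M \<mu>" and measV: "V \<in> M \<rightarrow>\<^sub>M N"
    and cd: "cond_density M \<mu> A N V f" and B: "B \<in> sets \<mu>"
    and phi[measurable]: "\<phi> \<in> borel_measurable M" and phib: "\<And>\<omega>. 0 \<le> \<phi> \<omega> \<and> \<phi> \<omega> \<le> 1"
    and hyp: "(\<integral>\<omega>. \<phi> \<omega> * indicator (A -` B \<inter> space M) \<omega> \<partial>M)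
       = (\<integral>\<omega>. \<phi> \<omega> * condE M N V (indicator (A -` B \<inter> space M)) \<omega> \<partial>M)"
  shows "(\<integral>\<^sup>+\<omega>. ennreal (\<phi> \<omega> * indicator (A -` B \<inter> space M) \<omega>) \<partial>M)
       = (\<integral>\<^sup>+\<omega>. ennreal (\<phi> \<omega>) * (\<integral>\<^sup>+a. ennreal (indicator B a * f a (V \<omega>)) \<partial>\<mu>) \<partial>M)"
proof -
  interpret F: sigma_finite_subalgebra M "gen M N V" by (rule sigma_finite_subalgebra_gen[OF M measV])
  interpret P: prob_space M by (rule M)
  define c where "c = condE M N V (indicator (A -` B \<inter> space M))"
  have ABs[measurable]: "A -` B \<inter> space M \<in> sets M" using measA B by measurable
  have c[measurable]: "c \<in> borel_measurable M" unfolding c_def condE_def by simp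
  have "integrable M (indicator (A -` B \<inter> space M) :: 'a \<Rightarrow> real)"
    by (rule P.integrable_const_bound[where B=1]) auto
  then have ci: "integrable M c" unfolding c_def condE_def by (rule F.real_cond_exp_int(1))
  have AEc: "AE \<omega> in M. 0 \<le> c \<omega> \<and> ennreal (c \<omega>) = (\<integral>\<^sup>+a. ennreal (indicator B a * f a (V \<omega>)) \<partial>\<mu>)"
    unfolding c_def by (rule cond_density_cond_exp_indicator[OF M measA measV cd B])
  have "(\<lambda>\<omega>. \<phi> \<omega> * indicator (A -` B \<inter> space M) \<omega>) \<in> borel_measurable M" by measurable
  then have int1: "integrable M (\<lambda>\<omega>. \<phi> \<omega> * indicator (A -` B \<inter> space M) \<omega>)"
    by (rule P.integrable_const_bound[where B=1, rotated]) (use phib in \<open>auto simp: indicator_def\<close>)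
  have int2: "integrable M (\<lambda>\<omega>. \<phi> \<omega> * c \<omega>)"
    by (rule Bochner_Integration.integrable_bound[OF ci])
      (use phib in \<open>auto simp: abs_mult intro!: mult_left_le_one_le\<close>)
  have "(\<integral>\<^sup>+\<omega>. ennreal (\<phi> \<omega> * indicator (A -` B \<inter> space M) \<omega>) \<partial>M)
      = ennreal (\<integral>\<omega>. \<phi> \<omega> * indicator (A -` B \<inter> space M) \<omega> \<partial>M)"
    by (rule nn_integral_eq_integral[OF int1]) (use phib in simp)
  also have "\<dots> = ennreal (\<integral>\<omega>. \<phi> \<omega> * c \<omega> \<partial>M)" using hyp c_def by simp
  also have "\<dots> = (\<integral>\<^sup>+\<omega>. ennreal (\<phi> \<omega> * c \<omega>) \<partial>M)"
    by (rule nn_integral_eq_integral[OF int2, symmetric]) (use AEc phib in auto)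
  also have "\<dots> = (\<integral>\<^sup>+\<omega>. ennreal (\<phi> \<omega>) * (\<integral>\<^sup>+a. ennreal (indicator B a * f a (V \<omega>)) \<partial>\<mu>) \<partial>M)"
    by (rule nn_integral_cong_AE) (use AEc phib in \<open>auto simp: ennreal_mult\<close>)
  finally show ?thesis .
qed

text \<open>The law of \<open>(a, V \<omega>)\<close> when \<open>\<omega>\<close> is drawn from \<open>M\<close> and then \<open>a\<close> from the
  (not necessarily normalised) \<open>\<mu>\<close>-density \<open>k \<omega>\<close>.\<close>

definition mixture_law :: "'o measure \<Rightarrow> 'a measure \<Rightarrow> 'v measure \<Rightarrow> ('o \<Rightarrow> 'v)
    \<Rightarrow> ('o \<Rightarrow> 'a \<Rightarrow> real) \<Rightarrow> ('a \<times> 'v) measure" where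
  "mixture_law M \<mu> N V k =
     distr (density (M \<Otimes>\<^sub>M \<mu>) (\<lambda>(\<omega>, a). ennreal (k \<omega> a))) (\<mu> \<Otimes>\<^sub>M N) (\<lambda>(\<omega>, a). (a, V \<omega>))"

lemma emeasure_mixture_law:
  assumes mu: "sigma_finite_measure \<mu>" and measV[measurable]: "V \<in> M \<rightarrow>\<^sub>M N"
    and k[measurable]: "(\<lambda>(\<omega>, a). k \<omega> a) \<in> borel_measurable (M \<Otimes>\<^sub>M \<mu>)"
    and S[measurable]: "S \<in> sets (\<mu> \<Otimes>\<^sub>M N)"
  shows "emeasure (mixture_law M \<mu> N V k) S
     = (\<integral>\<^sup>+\<omega>. (\<integral>\<^sup>+a. ennreal (k \<omega> a) * indicator S (a, V \<omega>) \<partial>\<mu>) \<partial>M)"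
proof -
  interpret mu: sigma_finite_measure \<mu> by (rule mu)
  have T[measurable]: "(\<lambda>(\<omega>, a). (a, V \<omega>)) \<in> M \<Otimes>\<^sub>M \<mu> \<rightarrow>\<^sub>M \<mu> \<Otimes>\<^sub>M N" by measurable
  have "emeasure (mixture_law M \<mu> N V k) S
     = emeasure (density (M \<Otimes>\<^sub>M \<mu>) (\<lambda>(\<omega>, a). ennreal (k \<omega> a))) ((\<lambda>(\<omega>, a). (a, V \<omega>)) -` S \<inter> space (M \<Otimes>\<^sub>M \<mu>))"
    unfolding mixture_law_def
    using emeasure_distr[of "\<lambda>(\<omega>, a). (a, V \<omega>)" "density (M \<Otimes>\<^sub>M \<mu>) (\<lambda>(\<omega>, a). ennreal (k \<omega> a))" "\<mu> \<Otimes>\<^sub>M N" S]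
    by simp
  also have "\<dots> = (\<integral>\<^sup>+p. (\<lambda>(\<omega>, a). ennreal (k \<omega> a)) p * indicator ((\<lambda>(\<omega>, a). (a, V \<omega>)) -` S \<inter> space (M \<Otimes>\<^sub>M \<mu>)) p \<partial>(M \<Otimes>\<^sub>M \<mu>))"
    by (rule emeasure_density) auto
  also have "\<dots> = (\<integral>\<^sup>+p. (\<lambda>(\<omega>, a). ennreal (k \<omega> a) * indicator S (a, V \<omega>)) p \<partial>(M \<Otimes>\<^sub>M \<mu>))"
    by (rule nn_integral_cong) (auto simp: indicator_def split: prod.splits)
  also have "\<dots> = (\<integral>\<^sup>+\<omega>. (\<integral>\<^sup>+a. ennreal (k \<omega> a) * indicator S (a, V \<omega>) \<partial>\<mu>) \<partial>M)"
  proof -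
    have "(\<lambda>(\<omega>, a). ennreal (k \<omega> a) * indicator S (a, V \<omega>)) \<in> borel_measurable (M \<Otimes>\<^sub>M \<mu>)"
      by measurable
    from mu.nn_integral_fst[OF this] show ?thesis by simp
  qed
  finally show ?thesis .
qed

lemma distr_eq_mixture_law:
  assumes M: "prob_space M" and mu: "sigma_finite_measure \<mu>"
    and measA[measurable]: "A \<in> M \<rightarrow>\<^sub>M \<mu>" and measV[measurable]: "V \<in> M \<rightarrow>\<^sub>M N"
    and k[measurable]: "(\<lambda>(\<omega>, a). k \<omega> a) \<in> borel_measurable (M \<Otimes>\<^sub>M \<mu>)"
    and rect: "\<And>B E. B \<in> sets \<mu> \<Longrightarrow> E \<in> sets N \<Longrightarrow>
        (\<integral>\<^sup>+\<omega>. ennreal (indicator E (V \<omega>) * indicator (A -` B \<inter> space M) \<omega>) \<partial>M)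
      = (\<integral>\<^sup>+\<omega>. ennreal (indicator E (V \<omega>)) * (\<integral>\<^sup>+a. ennreal (indicator B a * k \<omega> a) \<partial>\<mu>) \<partial>M)"
  shows "distr M (\<mu> \<Otimes>\<^sub>M N) (\<lambda>\<omega>. (A \<omega>, V \<omega>)) = mixture_law M \<mu> N V k"
proof (rule pair_measure_eqI_rectangles[where Ma=\<mu> and Mb=N])
  interpret P: prob_space M by (rule M)
  interpret D: prob_space "distr M (\<mu> \<Otimes>\<^sub>M N) (\<lambda>\<omega>. (A \<omega>, V \<omega>))"
    by (rule P.prob_space_distr) measurable
  show "emeasure (distr M (\<mu> \<Otimes>\<^sub>M N) (\<lambda>\<omega>. (A \<omega>, V \<omega>))) (space \<mu> \<times> space N) \<noteq> \<infinity>"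
    using D.emeasure_finite by simp
  fix B E assume B[measurable]: "B \<in> sets \<mu>" and E[measurable]: "E \<in> sets N"
  have "emeasure (distr M (\<mu> \<Otimes>\<^sub>M N) (\<lambda>\<omega>. (A \<omega>, V \<omega>))) (B \<times> E)
      = emeasure M ((\<lambda>\<omega>. (A \<omega>, V \<omega>)) -` (B \<times> E) \<inter> space M)"
    by (rule emeasure_distr) measurable
  also have "\<dots> = (\<integral>\<^sup>+\<omega>. ennreal (indicator E (V \<omega>) * indicator (A -` B \<inter> space M) \<omega>) \<partial>M)"
  proof -
    have S: "(\<lambda>\<omega>. (A \<omega>, V \<omega>)) -` (B \<times> E) \<inter> space M \<in> sets M" by measurable
    show ?thesis
      unfolding nn_integral_indicator[OF S, symmetric] by (rule nn_integral_cong) (auto simp: indicator_def)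
  qed
  also have "\<dots> = (\<integral>\<^sup>+\<omega>. (\<integral>\<^sup>+a. ennreal (k \<omega> a) * indicator (B \<times> E) (a, V \<omega>) \<partial>\<mu>) \<partial>M)"
    unfolding rect[OF B E]
  proof (rule nn_integral_cong)
    fix \<omega> assume \<omega>: "\<omega> \<in> space M"
    have "(\<integral>\<^sup>+a. ennreal (k \<omega> a) * indicator (B \<times> E) (a, V \<omega>) \<partial>\<mu>)
        = (\<integral>\<^sup>+a. ennreal (indicator E (V \<omega>)) * ennreal (indicator B a * k \<omega> a) \<partial>\<mu>)"
      by (rule nn_integral_cong) (auto simp: indicator_def)
    also have "\<dots> = ennreal (indicator E (V \<omega>)) * (\<integral>\<^sup>+a. ennreal (indicator B a * k \<omega> a) \<partial>\<mu>)"
      by (rule nn_integral_cmult) (use \<omega> in measurable)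
    finally show "ennreal (indicator E (V \<omega>)) * (\<integral>\<^sup>+a. ennreal (indicator B a * k \<omega> a) \<partial>\<mu>)
        = (\<integral>\<^sup>+a. ennreal (k \<omega> a) * indicator (B \<times> E) (a, V \<omega>) \<partial>\<mu>)" ..
  qed
  also have "\<dots> = emeasure (mixture_law M \<mu> N V k) (B \<times> E)"
    by (rule emeasure_mixture_law[OF mu measV k, symmetric]) simp
  finally show "emeasure (distr M (\<mu> \<Otimes>\<^sub>M N) (\<lambda>\<omega>. (A \<omega>, V \<omega>))) (B \<times> E)
      = emeasure (mixture_law M \<mu> N V k) (B \<times> E)" .
qed (simp_all add: mixture_law_def)

lemma distr_eq_cond_density_mixture_law:
  assumes M: "prob_space M" and mu: "sigma_finite_measure \<mu>"
    and measA[measurable]: "A \<in> M \<rightarrow>\<^sub>M \<mu>" and measV[measurable]: "V \<in> M \<rightarrow>\<^sub>M N"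
    and cd: "cond_density M \<mu> A N V f"
  shows "distr M (\<mu> \<Otimes>\<^sub>M N) (\<lambda>\<omega>. (A \<omega>, V \<omega>)) = mixture_law M \<mu> N V (\<lambda>\<omega> a. f a (V \<omega>))"
proof (rule distr_eq_mixture_law[OF M mu measA measV])
  interpret F: sigma_finite_subalgebra M "gen M N V" by (rule sigma_finite_subalgebra_gen[OF M measV])
  interpret P: prob_space M by (rule M)
  have "(\<lambda>(a, v). f a v) \<in> borel_measurable (\<mu> \<Otimes>\<^sub>M N)" using cd unfolding cond_density_def by blast
  then have "(\<lambda>p. f (snd p) (V (fst p))) \<in> borel_measurable (M \<Otimes>\<^sub>M \<mu>)"
    by (rule borel_measurable_case_prod_comp) measurable
  then show "(\<lambda>(\<omega>, a). f a (V \<omega>)) \<in> borel_measurable (M \<Otimes>\<^sub>M \<mu>)"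
    by (simp add: case_prod_beta')
  fix B E assume B[measurable]: "B \<in> sets \<mu>" and E[measurable]: "E \<in> sets N"
  have "(\<lambda>\<omega>. indicator E (V \<omega>) :: real) \<in> borel_measurable (gen M N V)"
    using measurable_gen_comp[OF measV, of "indicator E"] by simp
  moreover have "integrable M (\<lambda>\<omega>. indicator E (V \<omega>) * indicator (A -` B \<inter> space M) \<omega> :: real)"
    by (rule P.integrable_const_bound[where B=1]) (auto simp: indicator_def)
  ultimately have "(\<integral>\<omega>. indicator E (V \<omega>) * indicator (A -` B \<inter> space M) \<omega> \<partial>M)
       = (\<integral>\<omega>. indicator E (V \<omega>) * condE M N V (indicator (A -` B \<inter> space M)) \<omega> \<partial>M)"
    unfolding condE_def by (intro F.real_cond_exp_intg(2)[symmetric]) auto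
  then show "(\<integral>\<^sup>+\<omega>. ennreal (indicator E (V \<omega>) * indicator (A -` B \<inter> space M) \<omega>) \<partial>M)
      = (\<integral>\<^sup>+\<omega>. ennreal (indicator E (V \<omega>)) * (\<integral>\<^sup>+a. ennreal (indicator B a * f a (V \<omega>)) \<partial>\<mu>) \<partial>M)"
    by (rule nn_integral_cond_density[OF M measA measV cd B, rotated 2]) (auto simp: indicator_def)
qed

lemma (in sigma_finite_subalgebra) integral_indicator_Int_cond_indep:
  assumes fin: "finite_measure M" and CI: "cond_indep M F1 F2 F"
    and E1: "E1 \<in> sets F1" "E1 \<in> sets M" and E2: "E2 \<in> sets F2" "E2 \<in> sets M"
    and d[measurable]: "d \<in> borel_measurable F" and db: "\<And>x. \<bar>d x\<bar> \<le> 1"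
  shows "(\<integral>x. d x * indicator (E1 \<inter> E2) x \<partial>M)
       = (\<integral>x. d x * indicator E2 x * real_cond_exp M F (indicator E1) x \<partial>M)"
proof -
  interpret finite_measure M by (rule fin)
  define c1 where "c1 = real_cond_exp M F (indicator E1)"
  have [measurable]: "E1 \<in> sets M" "E2 \<in> sets M"
    "c1 \<in> borel_measurable F" "c1 \<in> borel_measurable M" using E1 E2 by (simp_all add: c1_def)
  have dM[measurable]: "d \<in> borel_measurable M" by (rule measurable_from_subalg[OF subalg d])
  have "integrable M (indicator E1 :: 'a \<Rightarrow> real)" by (rule integrable_const_bound[where B=1]) auto
  then have c1i: "integrable M c1" unfolding c1_def by (rule real_cond_exp_int(1))
  have "(\<integral>x. d x * indicator (E1 \<inter> E2) x \<partial>M) = (\<integral>x. d x * real_cond_exp M F (indicator (E1 \<inter> E2)) x \<partial>M)"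
    by (rule real_cond_exp_intg(2)[symmetric]) (auto intro!: integrable_const_bound[where B=1] simp: db abs_mult indicator_def)
  also have "\<dots> = (\<integral>x. (d x * c1 x) * real_cond_exp M F (indicator E2) x \<partial>M)"
  proof -
    have "AE x in M. real_cond_exp M F (indicator (E1 \<inter> E2)) x = c1 x * real_cond_exp M F (indicator E2) x"
      using CI E1 E2 unfolding cond_indep_def c1_def by blast
    then show ?thesis by (intro integral_cong_AE) (auto simp: c1_def)
  qed
  also have "\<dots> = (\<integral>x. (d x * c1 x) * indicator E2 x \<partial>M)"
  proof (rule real_cond_exp_intg(2))
    show "integrable M (\<lambda>x. d x * c1 x * indicator E2 x)"
      by (rule Bochner_Integration.integrable_bound[OF c1i])
        (measurable, auto simp: indicator_def abs_mult intro!: mult_left_le_one_le db)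
  qed auto
  finally show ?thesis by (simp add: c1_def mult_ac)
qed

lemma emeasure_distr_density:
  assumes g[measurable]: "g \<in> borel_measurable M" and V[measurable]: "V \<in> M \<rightarrow>\<^sub>M N"
    and E[measurable]: "E \<in> sets N"
  shows "emeasure (distr (density M g) N V) E = (\<integral>\<^sup>+\<omega>. g \<omega> * indicator E (V \<omega>) \<partial>M)"
proof -
  have "emeasure (distr (density M g) N V) E = emeasure (density M g) (V -` E \<inter> space M)"
    using emeasure_distr[of V "density M g" N E] by simp
  also have "\<dots> = (\<integral>\<^sup>+\<omega>. g \<omega> * indicator (V -` E \<inter> space M) \<omega> \<partial>M)"
    by (rule emeasure_density) measurable
  also have "\<dots> = (\<integral>\<^sup>+\<omega>. g \<omega> * indicator E (V \<omega>) \<partial>M)"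
    by (rule nn_integral_cong) (auto simp: indicator_def)
  finally show ?thesis .
qed

lemma nn_integral_indicator_pair_eqI:
  fixes g1 g2 :: "'o \<Rightarrow> ennreal"
  assumes V1[measurable]: "V1 \<in> M \<rightarrow>\<^sub>M Ma" and V2[measurable]: "V2 \<in> M \<rightarrow>\<^sub>M Mb"
    and g1[measurable]: "g1 \<in> borel_measurable M" and g2[measurable]: "g2 \<in> borel_measurable M"
    and fin: "(\<integral>\<^sup>+\<omega>. g1 \<omega> \<partial>M) \<noteq> \<infinity>"
    and rect: "\<And>C D. C \<in> sets Ma \<Longrightarrow> D \<in> sets Mb \<Longrightarrow>
        (\<integral>\<^sup>+\<omega>. g1 \<omega> * indicator (C \<times> D) (V1 \<omega>, V2 \<omega>) \<partial>M)
      = (\<integral>\<^sup>+\<omega>. g2 \<omega> * indicator (C \<times> D) (V1 \<omega>, V2 \<omega>) \<partial>M)"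
    and E: "E \<in> sets (Ma \<Otimes>\<^sub>M Mb)"
  shows "(\<integral>\<^sup>+\<omega>. g1 \<omega> * indicator E (V1 \<omega>, V2 \<omega>) \<partial>M)
       = (\<integral>\<^sup>+\<omega>. g2 \<omega> * indicator E (V1 \<omega>, V2 \<omega>) \<partial>M)"
proof -
  have V[measurable]: "(\<lambda>\<omega>. (V1 \<omega>, V2 \<omega>)) \<in> M \<rightarrow>\<^sub>M Ma \<Otimes>\<^sub>M Mb" by measurable
  let ?L = "\<lambda>g. distr (density M g) (Ma \<Otimes>\<^sub>M Mb) (\<lambda>\<omega>. (V1 \<omega>, V2 \<omega>))"
  have "?L g1 = ?L g2"
  proof (rule pair_measure_eqI_rectangles[where Ma=Ma and Mb=Mb])
    have "emeasure (?L g1) (space Ma \<times> space Mb) \<le> (\<integral>\<^sup>+\<omega>. g1 \<omega> \<partial>M)"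
      unfolding space_pair_measure[symmetric] emeasure_distr_density[OF g1 V sets.top]
      by (intro nn_integral_mono) (auto simp: indicator_def)
    then show "emeasure (?L g1) (space Ma \<times> space Mb) \<noteq> \<infinity>"
      using fin by (auto simp: top_unique)
  qed (simp_all add: emeasure_distr_density rect)
  then show ?thesis using emeasure_distr_density[OF g1 V E] emeasure_distr_density[OF g2 V E] by simp
qed

lemma nn_integral_cond_density_cond_indep:
  assumes M: "prob_space M" and mu: "sigma_finite_measure \<mu>"
    and measA[measurable]: "A \<in> M \<rightarrow>\<^sub>M \<mu>" and measW[measurable]: "W \<in> M \<rightarrow>\<^sub>M MW"
    and measU[measurable]: "U \<in> M \<rightarrow>\<^sub>M MU" and measX[measurable]: "X \<in> M \<rightarrow>\<^sub>M MX"
    and cd: "cond_density M \<mu> A (MU \<Otimes>\<^sub>M MX) (\<lambda>\<omega>. (U \<omega>, X \<omega>)) f"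
    and CI: "cond_indep M FA FW (gen M (MU \<Otimes>\<^sub>M MX) (\<lambda>\<omega>. (U \<omega>, X \<omega>)))"
    and A_FA: "\<And>B. B \<in> sets \<mu> \<Longrightarrow> A -` B \<inter> space M \<in> sets FA"
    and W_FW: "\<And>C. C \<in> sets MW \<Longrightarrow> W -` C \<inter> space M \<in> sets FW"
    and B[measurable]: "B \<in> sets \<mu>" and E: "E \<in> sets (MW \<Otimes>\<^sub>M MX)"
  shows "(\<integral>\<^sup>+\<omega>. ennreal (indicator E (W \<omega>, X \<omega>) * indicator (A -` B \<inter> space M) \<omega>) \<partial>M)
     = (\<integral>\<^sup>+\<omega>. ennreal (indicator E (W \<omega>, X \<omega>)) * (\<integral>\<^sup>+a. ennreal (indicator B a * f a (U \<omega>, X \<omega>)) \<partial>\<mu>) \<partial>M)"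
proof -
  interpret P: prob_space M by (rule M)
  interpret mu: sigma_finite_measure \<mu> by (rule mu)
  let ?G = "gen M (MU \<Otimes>\<^sub>M MX) (\<lambda>\<omega>. (U \<omega>, X \<omega>))"
  have measUX[measurable]: "(\<lambda>\<omega>. (U \<omega>, X \<omega>)) \<in> M \<rightarrow>\<^sub>M MU \<Otimes>\<^sub>M MX" by measurable
  interpret G: sigma_finite_subalgebra M ?G by (rule sigma_finite_subalgebra_gen[OF M measUX])
  define K where "K \<omega> = (\<integral>\<^sup>+a. ennreal (indicator B a * f a (U \<omega>, X \<omega>)) \<partial>\<mu>)" for \<omega>
  have "(\<lambda>(a, v). f a v) \<in> borel_measurable (\<mu> \<Otimes>\<^sub>M (MU \<Otimes>\<^sub>M MX))"
    using cd unfolding cond_density_def by blast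
  then have "(\<lambda>p. f (snd p) (U (fst p), X (fst p))) \<in> borel_measurable (M \<Otimes>\<^sub>M \<mu>)"
    by (rule borel_measurable_case_prod_comp) measurable
  then have K[measurable]: "K \<in> borel_measurable M"
    unfolding K_def by measurable
  have ABs[measurable]: "A -` B \<inter> space M \<in> sets M" by measurable
  have "(\<integral>\<^sup>+\<omega>. indicator (A -` B \<inter> space M) \<omega> * indicator E (W \<omega>, X \<omega>) \<partial>M)
      = (\<integral>\<^sup>+\<omega>. K \<omega> * indicator E (W \<omega>, X \<omega>) \<partial>M)"
  proof (rule nn_integral_indicator_pair_eqI[OF measW measX _ K _ _ E])
    show "(\<integral>\<^sup>+\<omega>. indicator (A -` B \<inter> space M) \<omega> \<partial>M) \<noteq> \<infinity>"
      using P.emeasure_finite[of "A -` B \<inter> space M"] nn_integral_indicator[OF ABs] by simp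
    fix C D assume C[measurable]: "C \<in> sets MW" and D[measurable]: "D \<in> sets MX"
    define \<phi> :: "'a \<Rightarrow> real" where "\<phi> \<omega> = indicator D (X \<omega>) * indicator C (W \<omega>)" for \<omega>
    have dG: "(\<lambda>\<omega>. indicator D (X \<omega>) :: real) \<in> borel_measurable ?G"
      using measurable_gen_comp[OF measUX, of "\<lambda>(u, x). indicator D x"] by simp
    have "(\<integral>\<omega>. \<phi> \<omega> * indicator (A -` B \<inter> space M) \<omega> \<partial>M)
        = (\<integral>\<omega>. indicator D (X \<omega>) * indicator ((A -` B \<inter> space M) \<inter> (W -` C \<inter> space M)) \<omega> \<partial>M)"
      by (rule Bochner_Integration.integral_cong) (auto simp: \<phi>_def indicator_def)
    also have "\<dots> = (\<integral>\<omega>. indicator D (X \<omega>) * indicator (W -` C \<inter> space M) \<omega>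
        * real_cond_exp M ?G (indicator (A -` B \<inter> space M)) \<omega> \<partial>M)"
      by (rule G.integral_indicator_Int_cond_indep[OF P.finite_measure_axioms CI A_FA[OF B] ABs W_FW[OF C] _ dG])
        (auto simp: indicator_def)
    also have "\<dots> = (\<integral>\<omega>. \<phi> \<omega> * condE M (MU \<Otimes>\<^sub>M MX) (\<lambda>\<omega>. (U \<omega>, X \<omega>)) (indicator (A -` B \<inter> space M)) \<omega> \<partial>M)"
      by (rule Bochner_Integration.integral_cong) (auto simp: \<phi>_def condE_def indicator_def)
    finally have "(\<integral>\<^sup>+\<omega>. ennreal (\<phi> \<omega> * indicator (A -` B \<inter> space M) \<omega>) \<partial>M) = (\<integral>\<^sup>+\<omega>. ennreal (\<phi> \<omega>) * K \<omega> \<partial>M)"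
      unfolding K_def
      by (intro nn_integral_cond_density[OF M measA measUX cd B]) (auto simp: \<phi>_def indicator_def)
    moreover have "(\<integral>\<^sup>+\<omega>. indicator (A -` B \<inter> space M) \<omega> * indicator (C \<times> D) (W \<omega>, X \<omega>) \<partial>M)
        = (\<integral>\<^sup>+\<omega>. ennreal (\<phi> \<omega> * indicator (A -` B \<inter> space M) \<omega>) \<partial>M)"
      by (rule nn_integral_cong) (auto simp: \<phi>_def indicator_def)
    moreover have "(\<integral>\<^sup>+\<omega>. K \<omega> * indicator (C \<times> D) (W \<omega>, X \<omega>) \<partial>M) = (\<integral>\<^sup>+\<omega>. ennreal (\<phi> \<omega>) * K \<omega> \<partial>M)"
      by (rule nn_integral_cong) (auto simp: \<phi>_def indicator_def)
    ultimately show "(\<integral>\<^sup>+\<omega>. indicator (A -` B \<inter> space M) \<omega> * indicator (C \<times> D) (W \<omega>, X \<omega>) \<partial>M)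
        = (\<integral>\<^sup>+\<omega>. K \<omega> * indicator (C \<times> D) (W \<omega>, X \<omega>) \<partial>M)" by simp
  qed measurable
  then show ?thesis unfolding K_def
    by (simp add: ennreal_indicator ennreal_mult mult.commute)
qed

lemma distr_eq_cond_indep_mixture_law:
  assumes M: "prob_space M" and mu: "sigma_finite_measure \<mu>"
    and measA[measurable]: "A \<in> M \<rightarrow>\<^sub>M \<mu>" and measW[measurable]: "W \<in> M \<rightarrow>\<^sub>M MW"
    and measU[measurable]: "U \<in> M \<rightarrow>\<^sub>M MU" and measX[measurable]: "X \<in> M \<rightarrow>\<^sub>M MX"
    and cd: "cond_density M \<mu> A (MU \<Otimes>\<^sub>M MX) (\<lambda>\<omega>. (U \<omega>, X \<omega>)) f"
    and CI: "cond_indep M FA FW (gen M (MU \<Otimes>\<^sub>M MX) (\<lambda>\<omega>. (U \<omega>, X \<omega>)))"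
    and A_FA: "\<And>B. B \<in> sets \<mu> \<Longrightarrow> A -` B \<inter> space M \<in> sets FA"
    and W_FW: "\<And>C. C \<in> sets MW \<Longrightarrow> W -` C \<inter> space M \<in> sets FW"
  shows "distr M (\<mu> \<Otimes>\<^sub>M (MW \<Otimes>\<^sub>M MX)) (\<lambda>\<omega>. (A \<omega>, (W \<omega>, X \<omega>)))
     = mixture_law M \<mu> (MW \<Otimes>\<^sub>M MX) (\<lambda>\<omega>. (W \<omega>, X \<omega>)) (\<lambda>\<omega> a. f a (U \<omega>, X \<omega>))"
proof (rule distr_eq_mixture_law[OF M mu measA])
  have "(\<lambda>(a, v). f a v) \<in> borel_measurable (\<mu> \<Otimes>\<^sub>M (MU \<Otimes>\<^sub>M MX))"
    using cd unfolding cond_density_def by blast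
  then have "(\<lambda>p. f (snd p) (U (fst p), X (fst p))) \<in> borel_measurable (M \<Otimes>\<^sub>M \<mu>)"
    by (rule borel_measurable_case_prod_comp) measurable
  then show "(\<lambda>(\<omega>, a). f a (U \<omega>, X \<omega>)) \<in> borel_measurable (M \<Otimes>\<^sub>M \<mu>)"
    by (simp add: case_prod_beta')
qed (use nn_integral_cond_density_cond_indep[OF assms] in simp_all)

lemma integral_mixture_law:
  fixes \<psi> :: "'a \<times> 'v \<Rightarrow> real"
  assumes measV[measurable]: "V \<in> M \<rightarrow>\<^sub>M N"
    and k[measurable]: "(\<lambda>(\<omega>, a). k \<omega> a) \<in> borel_measurable (M \<Otimes>\<^sub>M \<mu>)" and kpos: "\<And>\<omega> a. 0 \<le> k \<omega> a"
    and \<psi>[measurable]: "\<psi> \<in> borel_measurable (\<mu> \<Otimes>\<^sub>M N)"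
  shows "integral\<^sup>L (mixture_law M \<mu> N V k) \<psi> = (\<integral>p. k (fst p) (snd p) * \<psi> (snd p, V (fst p)) \<partial>(M \<Otimes>\<^sub>M \<mu>))"
proof -
  have T[measurable]: "(\<lambda>(\<omega>, a). (a, V \<omega>)) \<in> M \<Otimes>\<^sub>M \<mu> \<rightarrow>\<^sub>M \<mu> \<Otimes>\<^sub>M N" by measurable
  have "integral\<^sup>L (mixture_law M \<mu> N V k) \<psi>
      = integral\<^sup>L (density (M \<Otimes>\<^sub>M \<mu>) (\<lambda>p. ennreal (k (fst p) (snd p)))) (\<lambda>p. \<psi> (snd p, V (fst p)))"
    unfolding mixture_law_def by (subst integral_distr) (simp_all add: case_prod_beta')
  also have "\<dots> = (\<integral>p. k (fst p) (snd p) * \<psi> (snd p, V (fst p)) \<partial>(M \<Otimes>\<^sub>M \<mu>))"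
    using k by (subst integral_density) (auto simp: kpos case_prod_beta')
  finally show ?thesis .
qed

lemma AE_density_eq_0_of_mixture_law_eq:
  assumes mu: "sigma_finite_measure \<mu>" and measV[measurable]: "V \<in> M \<rightarrow>\<^sub>M N"
    and k1[measurable]: "(\<lambda>(\<omega>, a). k1 \<omega> a) \<in> borel_measurable (M \<Otimes>\<^sub>M \<mu>)"
    and k2[measurable]: "(\<lambda>(\<omega>, a). k2 \<omega> a) \<in> borel_measurable (M \<Otimes>\<^sub>M \<mu>)"
    and k2pos: "\<And>\<omega> a. 0 \<le> k2 \<omega> a"
    and S[measurable]: "S \<in> sets (\<mu> \<Otimes>\<^sub>M N)"
    and eq: "mixture_law M \<mu> N V k1 = mixture_law M \<mu> N V k2"
    and vanish: "\<And>\<omega> a. (a, V \<omega>) \<in> S \<Longrightarrow> k1 \<omega> a \<le> 0"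
  shows "AE p in M \<Otimes>\<^sub>M \<mu>. (snd p, V (fst p)) \<in> S \<longrightarrow> k2 (fst p) (snd p) = 0"
proof -
  interpret mu: sigma_finite_measure \<mu> by (rule mu)
  have zero: "ennreal (k1 \<omega> a) * indicator S (a, V \<omega>) = 0" for \<omega> a
    using vanish[of a \<omega>] by (auto simp: indicator_def ennreal_eq_0_iff)
  then have "emeasure (mixture_law M \<mu> N V k1) S = 0"
    unfolding emeasure_mixture_law[OF mu measV k1 S] zero by simp
  then have iterated: "(\<integral>\<^sup>+\<omega>. (\<integral>\<^sup>+a. ennreal (k2 \<omega> a) * indicator S (a, V \<omega>) \<partial>\<mu>) \<partial>M) = 0"
    unfolding eq emeasure_mixture_law[OF mu measV k2 S] .
  have "(\<lambda>(\<omega>, a). ennreal (k2 \<omega> a) * indicator S (a, V \<omega>)) \<in> borel_measurable (M \<Otimes>\<^sub>M \<mu>)"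
    by measurable
  from mu.nn_integral_fst[OF this] iterated have "(\<integral>\<^sup>+p. ennreal (k2 (fst p) (snd p)) * indicator S (snd p, V (fst p)) \<partial>(M \<Otimes>\<^sub>M \<mu>)) = 0"
    by (simp add: case_prod_beta')
  then have "AE p in M \<Otimes>\<^sub>M \<mu>. ennreal (k2 (fst p) (snd p)) * indicator S (snd p, V (fst p)) = 0"
    by (subst (asm) nn_integral_0_iff_AE) measurable
  then show ?thesis
    by eventually_elim (use k2pos in \<open>auto simp: indicator_def ennreal_eq_0_iff intro: order.antisym\<close>)
qed

text \<open>Under the positivity assumption (NC)(v), the conditional density of \<open>A\<close> given \<open>(W, X)\<close>
  can vanish only where \<open>\<pi>\<close> does: the law of \<open>(A, W, X)\<close> is also the mixture along the
  density given \<open>(U, X)\<close>, which is positive wherever \<open>\<pi>\<close> is not zero.\<close>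

lemma AE_pi_eq_0_of_cond_density_eq_0:
  fixes \<pi> :: "'a \<Rightarrow> 'x \<Rightarrow> real"
  assumes M: "prob_space M" and mu: "sigma_finite_measure \<mu>"
    and measA[measurable]: "A \<in> M \<rightarrow>\<^sub>M \<mu>" and measW[measurable]: "W \<in> M \<rightarrow>\<^sub>M MW"
    and measU[measurable]: "U \<in> M \<rightarrow>\<^sub>M MU" and measX[measurable]: "X \<in> M \<rightarrow>\<^sub>M MX"
    and cdU: "cond_density M \<mu> A (MU \<Otimes>\<^sub>M MX) (\<lambda>\<omega>. (U \<omega>, X \<omega>)) fU"
    and cdW: "cond_density M \<mu> A (MW \<Otimes>\<^sub>M MX) (\<lambda>\<omega>. (W \<omega>, X \<omega>)) fW"
    and CI: "cond_indep M FA FW (gen M (MU \<Otimes>\<^sub>M MX) (\<lambda>\<omega>. (U \<omega>, X \<omega>)))"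
    and A_FA: "\<And>B. B \<in> sets \<mu> \<Longrightarrow> A -` B \<inter> space M \<in> sets FA"
    and W_FW: "\<And>C. C \<in> sets MW \<Longrightarrow> W -` C \<inter> space M \<in> sets FW"
    and positivity: "\<forall>a x u. \<pi> a x \<noteq> 0 \<longrightarrow> fU a (u, x) \<noteq> 0"
    and measpi[measurable]: "(\<lambda>(a, x). \<pi> a x) \<in> borel_measurable (\<mu> \<Otimes>\<^sub>M MX)"
  shows "AE p in M \<Otimes>\<^sub>M \<mu>. fW (snd p) (W (fst p), X (fst p)) = 0 \<longrightarrow> \<pi> (snd p) (X (fst p)) = 0"
proof -
  let ?N = "MW \<Otimes>\<^sub>M MX"
  have measWX[measurable]: "(\<lambda>\<omega>. (W \<omega>, X \<omega>)) \<in> M \<rightarrow>\<^sub>M ?N" by measurable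
  have fW[measurable]: "(\<lambda>(a, v). fW a v) \<in> borel_measurable (\<mu> \<Otimes>\<^sub>M ?N)"
    using cdW unfolding cond_density_def by blast
  have fU: "(\<lambda>(a, v). fU a v) \<in> borel_measurable (\<mu> \<Otimes>\<^sub>M (MU \<Otimes>\<^sub>M MX))"
    and fUpos: "\<And>a v. 0 \<le> fU a v" using cdU unfolding cond_density_def by blast+
  have "(\<lambda>p. fW (snd p) (W (fst p), X (fst p))) \<in> borel_measurable (M \<Otimes>\<^sub>M \<mu>)"
    by (rule borel_measurable_case_prod_comp[OF fW]) measurable
  then have kW: "(\<lambda>(\<omega>, a). fW a (W \<omega>, X \<omega>)) \<in> borel_measurable (M \<Otimes>\<^sub>M \<mu>)"
    by (simp add: case_prod_beta')
  have "(\<lambda>p. fU (snd p) (U (fst p), X (fst p))) \<in> borel_measurable (M \<Otimes>\<^sub>M \<mu>)"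
    by (rule borel_measurable_case_prod_comp[OF fU]) measurable
  then have kU: "(\<lambda>(\<omega>, a). fU a (U \<omega>, X \<omega>)) \<in> borel_measurable (M \<Otimes>\<^sub>M \<mu>)"
    by (simp add: case_prod_beta')
  define S where "S = {p \<in> space (\<mu> \<Otimes>\<^sub>M ?N). fW (fst p) (snd p) = 0 \<and> \<pi> (fst p) (snd (snd p)) \<noteq> 0}"
  have "(\<lambda>p. \<pi> (fst p) (snd (snd p))) \<in> borel_measurable (\<mu> \<Otimes>\<^sub>M ?N)"
    by (rule borel_measurable_case_prod_comp[OF measpi]) measurable
  moreover have "(\<lambda>p. fW (fst p) (snd p)) \<in> borel_measurable (\<mu> \<Otimes>\<^sub>M ?N)"
    using fW by (simp add: case_prod_beta')
  ultimately have S: "S \<in> sets (\<mu> \<Otimes>\<^sub>M ?N)"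
    unfolding S_def by measurable
  have "mixture_law M \<mu> ?N (\<lambda>\<omega>. (W \<omega>, X \<omega>)) (\<lambda>\<omega> a. fW a (W \<omega>, X \<omega>))
      = mixture_law M \<mu> ?N (\<lambda>\<omega>. (W \<omega>, X \<omega>)) (\<lambda>\<omega> a. fU a (U \<omega>, X \<omega>))"
    using distr_eq_cond_density_mixture_law[OF M mu measA measWX cdW]
      distr_eq_cond_indep_mixture_law[OF M mu measA measW measU measX cdU CI A_FA W_FW] by simp
  from AE_density_eq_0_of_mixture_law_eq[OF mu measWX kW kU fUpos S this]
  have "AE p in M \<Otimes>\<^sub>M \<mu>. (snd p, W (fst p), X (fst p)) \<in> S \<longrightarrow> fU (snd p) (U (fst p), X (fst p)) = 0"
    by (auto simp: S_def)
  then show ?thesis using AE_space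
  proof eventually_elim
    case (elim p)
    then have "(snd p, W (fst p), X (fst p)) \<in> space (\<mu> \<Otimes>\<^sub>M ?N)"
      using measurable_space[OF measW] measurable_space[OF measX] by (auto simp: space_pair_measure)
    then show ?case using elim(1) positivity by (auto simp: S_def)
  qed
qed

lemma integrable_Top_integrand:
  fixes \<pi> :: "'a \<Rightarrow> 'x \<Rightarrow> real" and h :: "'w \<Rightarrow> 'a \<Rightarrow> 'x \<Rightarrow> real"
  assumes M: "prob_space M" and mu: "sigma_finite_measure \<mu>"
    and measW[measurable]: "W \<in> M \<rightarrow>\<^sub>M MW" and measX[measurable]: "X \<in> M \<rightarrow>\<^sub>M MX"
    and measpi: "(\<lambda>(a, x). \<pi> a x) \<in> borel_measurable (\<mu> \<Otimes>\<^sub>M MX)"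
    and hm: "(\<lambda>(w, a, x). h w a x) \<in> borel_measurable (MW \<Otimes>\<^sub>M \<mu> \<Otimes>\<^sub>M MX)"
    and hT: "(AE \<omega> in M. integrable \<mu> (\<lambda>a. h (W \<omega>) a (X \<omega>) * \<pi> a (X \<omega>))) \<and>
               integrable M (\<lambda>\<omega>. \<integral>a. \<bar>h (W \<omega>) a (X \<omega>) * \<pi> a (X \<omega>)\<bar> \<partial>\<mu>)"
  shows "integrable (M \<Otimes>\<^sub>M \<mu>) (\<lambda>(\<omega>, a). h (W \<omega>) a (X \<omega>) * \<pi> a (X \<omega>))"
proof -
  interpret P: prob_space M by (rule M)
  interpret mu: sigma_finite_measure \<mu> by (rule mu)
  interpret PS: pair_sigma_finite M \<mu> by standard
  have "(\<lambda>p. h (W (fst p)) (snd p) (X (fst p))) \<in> borel_measurable (M \<Otimes>\<^sub>M \<mu>)"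
    by (rule borel_measurable_case_prod3_comp[OF hm]) measurable
  moreover have "(\<lambda>p. \<pi> (snd p) (X (fst p))) \<in> borel_measurable (M \<Otimes>\<^sub>M \<mu>)"
    by (rule borel_measurable_case_prod_comp[OF measpi]) measurable
  ultimately have "(\<lambda>p. h (W (fst p)) (snd p) (X (fst p)) * \<pi> (snd p) (X (fst p))) \<in> borel_measurable (M \<Otimes>\<^sub>M \<mu>)"
    by (rule borel_measurable_times)
  then have "(\<lambda>(\<omega>, a). h (W \<omega>) a (X \<omega>) * \<pi> a (X \<omega>)) \<in> borel_measurable (M \<Otimes>\<^sub>M \<mu>)"
    by (simp add: case_prod_beta')
  then show ?thesis by (rule PS.Fubini_integrable) (use hT in simp_all)
qed

lemma integrable_Top:
  fixes \<pi> :: "'a \<Rightarrow> 'x \<Rightarrow> real" and h :: "'w \<Rightarrow> 'a \<Rightarrow> 'x \<Rightarrow> real"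
  assumes M: "prob_space M" and mu: "sigma_finite_measure \<mu>"
    and "W \<in> M \<rightarrow>\<^sub>M MW" and "X \<in> M \<rightarrow>\<^sub>M MX"
    and "(\<lambda>(a, x). \<pi> a x) \<in> borel_measurable (\<mu> \<Otimes>\<^sub>M MX)"
    and "(\<lambda>(w, a, x). h w a x) \<in> borel_measurable (MW \<Otimes>\<^sub>M \<mu> \<Otimes>\<^sub>M MX)"
    and "(AE \<omega> in M. integrable \<mu> (\<lambda>a. h (W \<omega>) a (X \<omega>) * \<pi> a (X \<omega>))) \<and>
           integrable M (\<lambda>\<omega>. \<integral>a. \<bar>h (W \<omega>) a (X \<omega>) * \<pi> a (X \<omega>)\<bar> \<partial>\<mu>)"
  shows "integrable M (\<lambda>\<omega>. Top \<mu> \<pi> h (W \<omega>) (X \<omega>))"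
proof -
  interpret P: prob_space M by (rule M)
  interpret mu: sigma_finite_measure \<mu> by (rule mu)
  interpret PS: pair_sigma_finite M \<mu> by standard
  show ?thesis
    using PS.integrable_fst[of "\<lambda>\<omega> a. h (W \<omega>) a (X \<omega>) * \<pi> a (X \<omega>)"] integrable_Top_integrand[OF assms]
    by (simp add: Top_def)
qed

lemma integral_inverse_cond_density_weight:
  fixes \<pi> :: "'a \<Rightarrow> 'x \<Rightarrow> real" and h :: "'w \<Rightarrow> 'a \<Rightarrow> 'x \<Rightarrow> real"
  assumes M: "prob_space M" and mu: "sigma_finite_measure \<mu>"
    and measA[measurable]: "A \<in> M \<rightarrow>\<^sub>M \<mu>" and measW[measurable]: "W \<in> M \<rightarrow>\<^sub>M MW"
    and measU[measurable]: "U \<in> M \<rightarrow>\<^sub>M MU" and measX[measurable]: "X \<in> M \<rightarrow>\<^sub>M MX"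
    and cdU: "cond_density M \<mu> A (MU \<Otimes>\<^sub>M MX) (\<lambda>\<omega>. (U \<omega>, X \<omega>)) fU"
    and cdW: "cond_density M \<mu> A (MW \<Otimes>\<^sub>M MX) (\<lambda>\<omega>. (W \<omega>, X \<omega>)) fW"
    and CI: "cond_indep M FA FW (gen M (MU \<Otimes>\<^sub>M MX) (\<lambda>\<omega>. (U \<omega>, X \<omega>)))"
    and A_FA: "\<And>B. B \<in> sets \<mu> \<Longrightarrow> A -` B \<inter> space M \<in> sets FA"
    and W_FW: "\<And>C. C \<in> sets MW \<Longrightarrow> W -` C \<inter> space M \<in> sets FW"
    and positivity: "\<forall>a x u. \<pi> a x \<noteq> 0 \<longrightarrow> fU a (u, x) \<noteq> 0"
    and measpi: "(\<lambda>(a, x). \<pi> a x) \<in> borel_measurable (\<mu> \<Otimes>\<^sub>M MX)"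
    and hm: "(\<lambda>(w, a, x). h w a x) \<in> borel_measurable (MW \<Otimes>\<^sub>M \<mu> \<Otimes>\<^sub>M MX)"
    and hT: "(AE \<omega> in M. integrable \<mu> (\<lambda>a. h (W \<omega>) a (X \<omega>) * \<pi> a (X \<omega>))) \<and>
               integrable M (\<lambda>\<omega>. \<integral>a. \<bar>h (W \<omega>) a (X \<omega>) * \<pi> a (X \<omega>)\<bar> \<partial>\<mu>)"
  shows "(\<integral>\<omega>. h (W \<omega>) (A \<omega>) (X \<omega>) * (\<pi> (A \<omega>) (X \<omega>) / fW (A \<omega>) (W \<omega>, X \<omega>)) \<partial>M)
       = (\<integral>\<omega>. Top \<mu> \<pi> h (W \<omega>) (X \<omega>) \<partial>M)"
proof -
  interpret mu: sigma_finite_measure \<mu> by (rule mu)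
  interpret PS: pair_sigma_finite M \<mu> using M mu by (simp add: pair_sigma_finite_def prob_space_imp_sigma_finite)
  let ?N = "MW \<Otimes>\<^sub>M MX"
  define \<psi> :: "'a \<times> 'w \<times> 'x \<Rightarrow> real" where "\<psi> p = h (fst (snd p)) (fst p) (snd (snd p))
      * (\<pi> (fst p) (snd (snd p)) / fW (fst p) (snd p))" for p
  have measWX[measurable]: "(\<lambda>\<omega>. (W \<omega>, X \<omega>)) \<in> M \<rightarrow>\<^sub>M ?N" by measurable
  have fW: "(\<lambda>(a, v). fW a v) \<in> borel_measurable (\<mu> \<Otimes>\<^sub>M ?N)" and fWpos: "\<And>a v. 0 \<le> fW a v"
    using cdW unfolding cond_density_def by blast+
  have kW: "(\<lambda>(\<omega>, a). fW a (W \<omega>, X \<omega>)) \<in> borel_measurable (M \<Otimes>\<^sub>M \<mu>)"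
    using borel_measurable_case_prod_comp[OF fW, of snd _ "\<lambda>p. (W (fst p), X (fst p))"]
    by (simp add: case_prod_beta')
  have "(\<lambda>p. h (fst (snd p)) (fst p) (snd (snd p))) \<in> borel_measurable (\<mu> \<Otimes>\<^sub>M ?N)"
    by (rule borel_measurable_case_prod3_comp[OF hm]) measurable
  moreover have "(\<lambda>p. \<pi> (fst p) (snd (snd p))) \<in> borel_measurable (\<mu> \<Otimes>\<^sub>M ?N)"
    by (rule borel_measurable_case_prod_comp[OF measpi]) measurable
  moreover have "(\<lambda>p. fW (fst p) (snd p)) \<in> borel_measurable (\<mu> \<Otimes>\<^sub>M ?N)"
    using fW by (simp add: case_prod_beta')
  ultimately have \<psi>[measurable]: "\<psi> \<in> borel_measurable (\<mu> \<Otimes>\<^sub>M ?N)"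
    unfolding \<psi>_def by measurable
  have "(\<integral>\<omega>. h (W \<omega>) (A \<omega>) (X \<omega>) * (\<pi> (A \<omega>) (X \<omega>) / fW (A \<omega>) (W \<omega>, X \<omega>)) \<partial>M)
      = integral\<^sup>L (distr M (\<mu> \<Otimes>\<^sub>M ?N) (\<lambda>\<omega>. (A \<omega>, (W \<omega>, X \<omega>)))) \<psi>"
    by (subst integral_distr) (simp_all add: \<psi>_def)
  also have "\<dots> = integral\<^sup>L (mixture_law M \<mu> ?N (\<lambda>\<omega>. (W \<omega>, X \<omega>)) (\<lambda>\<omega> a. fW a (W \<omega>, X \<omega>))) \<psi>"
    by (simp add: distr_eq_cond_density_mixture_law[OF M mu measA measWX cdW])
  also have "\<dots> = (\<integral>p. fW (snd p) (W (fst p), X (fst p)) * \<psi> (snd p, W (fst p), X (fst p)) \<partial>(M \<Otimes>\<^sub>M \<mu>))"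
    by (rule integral_mixture_law[OF measWX kW fWpos \<psi>])
  also have "\<dots> = (\<integral>p. (\<lambda>(\<omega>, a). h (W \<omega>) a (X \<omega>) * \<pi> a (X \<omega>)) p \<partial>(M \<Otimes>\<^sub>M \<mu>))"
  proof (rule integral_cong_AE)
    have "(\<lambda>p. (snd p, W (fst p), X (fst p))) \<in> M \<Otimes>\<^sub>M \<mu> \<rightarrow>\<^sub>M \<mu> \<Otimes>\<^sub>M ?N" by measurable
    from measurable_compose[OF this \<psi>]
    have "(\<lambda>p. \<psi> (snd p, W (fst p), X (fst p))) \<in> borel_measurable (M \<Otimes>\<^sub>M \<mu>)" .
    moreover have "(\<lambda>p. fW (snd p) (W (fst p), X (fst p))) \<in> borel_measurable (M \<Otimes>\<^sub>M \<mu>)"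
      using kW by (simp add: case_prod_beta')
    ultimately show "(\<lambda>p. fW (snd p) (W (fst p), X (fst p)) * \<psi> (snd p, W (fst p), X (fst p)))
        \<in> borel_measurable (M \<Otimes>\<^sub>M \<mu>)"
      by (rule borel_measurable_times[rotated])
    show "(\<lambda>(\<omega>, a). h (W \<omega>) a (X \<omega>) * \<pi> a (X \<omega>)) \<in> borel_measurable (M \<Otimes>\<^sub>M \<mu>)"
      using integrable_Top_integrand[OF M mu measW measX measpi hm hT] by auto
    show "AE p in M \<Otimes>\<^sub>M \<mu>. fW (snd p) (W (fst p), X (fst p)) * \<psi> (snd p, W (fst p), X (fst p))
        = (\<lambda>(\<omega>, a). h (W \<omega>) a (X \<omega>) * \<pi> a (X \<omega>)) p"
      using AE_pi_eq_0_of_cond_density_eq_0[OF M mu measA measW measU measX cdU cdW CI A_FA W_FW positivity measpi]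
      by (rule AE_mp) (auto simp: \<psi>_def case_prod_beta' intro!: AE_I2)
  qed
  also have "\<dots> = (\<integral>\<omega>. Top \<mu> \<pi> h (W \<omega>) (X \<omega>) \<partial>M)"
    using PS.integral_fst'[OF integrable_Top_integrand[OF M mu measW measX measpi hm hT]]
    by (simp add: Top_def)
  finally show ?thesis .
qed

text \<open>The observed bridge \<open>q\<^sub>0\<close> satisfies \<open>E[\<pi> q\<^sub>0 | W, A, X] = \<pi>(A|X) / f(A|W,X)\<close>, which reduces the
  moment \<open>E[\<pi> q\<^sub>0 h]\<close> to the inverse density weighting above.\<close>

lemma integral_obs_bridge_eq_Top:
  fixes \<pi> :: "'a \<Rightarrow> 'x \<Rightarrow> real" and h :: "'w \<Rightarrow> 'a \<Rightarrow> 'x \<Rightarrow> real"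
  assumes M: "prob_space M" and mu: "sigma_finite_measure \<mu>"
    and measA[measurable]: "A \<in> M \<rightarrow>\<^sub>M \<mu>" and measW[measurable]: "W \<in> M \<rightarrow>\<^sub>M MW"
    and measU[measurable]: "U \<in> M \<rightarrow>\<^sub>M MU" and measX[measurable]: "X \<in> M \<rightarrow>\<^sub>M MX"
    and measZ[measurable]: "Z \<in> M \<rightarrow>\<^sub>M MZ"
    and cdU: "cond_density M \<mu> A (MU \<Otimes>\<^sub>M MX) (\<lambda>\<omega>. (U \<omega>, X \<omega>)) fU"
    and cdW: "cond_density M \<mu> A (MW \<Otimes>\<^sub>M MX) (\<lambda>\<omega>. (W \<omega>, X \<omega>)) fW"
    and CI: "cond_indep M FA FW (gen M (MU \<Otimes>\<^sub>M MX) (\<lambda>\<omega>. (U \<omega>, X \<omega>)))"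
    and A_FA: "\<And>B. B \<in> sets \<mu> \<Longrightarrow> A -` B \<inter> space M \<in> sets FA"
    and W_FW: "\<And>C. C \<in> sets MW \<Longrightarrow> W -` C \<inter> space M \<in> sets FW"
    and positivity: "\<forall>a x u. \<pi> a x \<noteq> 0 \<longrightarrow> fU a (u, x) \<noteq> 0"
    and measpi[measurable]: "(\<lambda>(a, x). \<pi> a x) \<in> borel_measurable (\<mu> \<Otimes>\<^sub>M MX)"
    and q0: "q0 \<in> Q0obs M MW MZ \<mu> MX \<pi> fW W Z A X"
    and h_L2: "L2fun M (MW \<Otimes>\<^sub>M \<mu> \<Otimes>\<^sub>M MX) (\<lambda>\<omega>. (W \<omega>, A \<omega>, X \<omega>)) (\<lambda>(w, a, x). h w a x)"
    and hT: "(AE \<omega> in M. integrable \<mu> (\<lambda>a. h (W \<omega>) a (X \<omega>) * \<pi> a (X \<omega>))) \<and>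
               integrable M (\<lambda>\<omega>. \<integral>a. \<bar>h (W \<omega>) a (X \<omega>) * \<pi> a (X \<omega>)\<bar> \<partial>\<mu>)"
  shows "(\<integral>\<omega>. \<pi> (A \<omega>) (X \<omega>) * q0 (Z \<omega>) (A \<omega>) (X \<omega>) * h (W \<omega>) (A \<omega>) (X \<omega>) \<partial>M)
       = (\<integral>\<omega>. Top \<mu> \<pi> h (W \<omega>) (X \<omega>) \<partial>M)"
proof -
  interpret P: prob_space M by (rule M)
  let ?N = "MW \<Otimes>\<^sub>M \<mu> \<Otimes>\<^sub>M MX"
  let ?G = "gen M ?N (\<lambda>\<omega>. (W \<omega>, A \<omega>, X \<omega>))"
  have measV: "(\<lambda>\<omega>. (W \<omega>, A \<omega>, X \<omega>)) \<in> M \<rightarrow>\<^sub>M ?N" by measurable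
  interpret G: sigma_finite_subalgebra M ?G by (rule sigma_finite_subalgebra_gen[OF M measV])
  define p where "p \<omega> = \<pi> (A \<omega>) (X \<omega>) * q0 (Z \<omega>) (A \<omega>) (X \<omega>)" for \<omega>
  define r where "r \<omega> = \<pi> (A \<omega>) (X \<omega>) / fW (A \<omega>) (W \<omega>, X \<omega>)" for \<omega>
  have "L2fun M (MZ \<Otimes>\<^sub>M \<mu> \<Otimes>\<^sub>M MX) (\<lambda>\<omega>. (Z \<omega>, A \<omega>, X \<omega>)) (\<lambda>(z, a, x). \<pi> a x * q0 z a x)"
    using q0 unfolding Q0obs_def by blast
  from L2fun_comp(2,3)[OF this] have pM: "p \<in> borel_measurable M" and p2: "integrable M (\<lambda>\<omega>. (p \<omega>)\<^sup>2)"
    unfolding p_def by simp_all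
  have hG: "(\<lambda>\<omega>. h (W \<omega>) (A \<omega>) (X \<omega>)) \<in> borel_measurable ?G"
    and hM: "(\<lambda>\<omega>. h (W \<omega>) (A \<omega>) (X \<omega>)) \<in> borel_measurable M"
    and h2: "integrable M (\<lambda>\<omega>. (h (W \<omega>) (A \<omega>) (X \<omega>))\<^sup>2)"
    using L2fun_comp[OF h_L2 measV] by simp_all
  have fW: "(\<lambda>(a, v). fW a v) \<in> borel_measurable (\<mu> \<Otimes>\<^sub>M (MW \<Otimes>\<^sub>M MX))"
    using cdW unfolding cond_density_def by blast
  have "(\<lambda>(w, a, x). \<pi> a x / fW a (w, x)) \<in> borel_measurable ?N"
  proof -
    have "(\<lambda>v. \<pi> (fst (snd v)) (snd (snd v))) \<in> borel_measurable ?N"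
      by (rule borel_measurable_case_prod_comp[OF measpi]) measurable
    moreover have "(\<lambda>v. fW (fst (snd v)) (fst v, snd (snd v))) \<in> borel_measurable ?N"
      by (rule borel_measurable_case_prod_comp[OF fW]) measurable
    ultimately show ?thesis by (simp add: case_prod_beta')
  qed
  from measurable_gen_comp[OF measV this] have rG: "r \<in> borel_measurable ?G"
    unfolding r_def by simp
  have "AE \<omega> in M. real_cond_exp M ?G (\<lambda>\<omega>. \<pi> (A \<omega>) (X \<omega>) * (q0 (Z \<omega>) (A \<omega>) (X \<omega>)
      - 1 / fW (A \<omega>) (W \<omega>, X \<omega>))) \<omega> = 0"
    using q0 unfolding Q0obs_def condE_def by blast
  moreover have "(\<lambda>\<omega>. \<pi> (A \<omega>) (X \<omega>) * (q0 (Z \<omega>) (A \<omega>) (X \<omega>) - 1 / fW (A \<omega>) (W \<omega>, X \<omega>)))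
      = (\<lambda>\<omega>. p \<omega> - r \<omega>)"
    by (simp add: p_def r_def right_diff_distrib)
  ultimately have version: "AE \<omega> in M. real_cond_exp M ?G p \<omega> = r \<omega>"
    using G.real_cond_exp_eq_of_real_cond_exp_diff_eq_0[OF P.finite_measure_axioms
        P.square_integrable_imp_integrable[OF pM p2] rG]
    by simp
  have "(\<integral>\<omega>. p \<omega> * h (W \<omega>) (A \<omega>) (X \<omega>) \<partial>M) = (\<integral>\<omega>. h (W \<omega>) (A \<omega>) (X \<omega>) * real_cond_exp M ?G p \<omega> \<partial>M)"
    using G.real_cond_exp_intg(2)[OF _ hG pM] integrable_mult_of_square_integrable[OF hM pM h2 p2]
    by (simp add: mult.commute)
  also have "\<dots> = (\<integral>\<omega>. h (W \<omega>) (A \<omega>) (X \<omega>) * r \<omega> \<partial>M)"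
    using version measurable_from_subalg[OF G.subalg rG] hM by (intro integral_cong_AE) auto
  also have "\<dots> = (\<integral>\<omega>. Top \<mu> \<pi> h (W \<omega>) (X \<omega>) \<partial>M)"
    unfolding r_def using L2fun_def h_L2
    by (intro integral_inverse_cond_density_weight[OF M mu measA measW measU measX cdU cdW CI A_FA W_FW
          positivity measpi _ hT]) auto
  finally show ?thesis by (simp add: p_def)
qed

lemma qhat_projected_error_bound:
  fixes M :: "'o measure" and \<mu> :: "'a measure"
    and MU :: "'u measure" and MW :: "'w measure" and MZ :: "'z measure" and MX :: "'x measure"
    and W :: "'o \<Rightarrow> 'w" and Z :: "'o \<Rightarrow> 'z" and A :: "'o \<Rightarrow> 'a"
    and X :: "'o \<Rightarrow> 'x" and U :: "'o \<Rightarrow> 'u" and Ya :: "'o \<Rightarrow> real"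
    and \<pi> :: "'a \<Rightarrow> 'x \<Rightarrow> real"
    and D :: "(real \<times> 'w \<times> 'z \<times> 'a \<times> 'x) list"
    and HH' :: "('w \<Rightarrow> 'a \<Rightarrow> 'x \<Rightarrow> real) set" and QQ :: "('z \<Rightarrow> 'a \<Rightarrow> 'x \<Rightarrow> real) set"
  assumes M: "prob_space M" and mu: "sigma_finite_measure \<mu>"
    and measW[measurable]: "W \<in> M \<rightarrow>\<^sub>M MW" and measZ[measurable]: "Z \<in> M \<rightarrow>\<^sub>M MZ"
    and measA[measurable]: "A \<in> M \<rightarrow>\<^sub>M \<mu>" and measX[measurable]: "X \<in> M \<rightarrow>\<^sub>M MX"
    and measU[measurable]: "U \<in> M \<rightarrow>\<^sub>M MU"
    and measpi[measurable]: "(\<lambda>(a, x). \<pi> a x) \<in> borel_measurable (\<mu> \<Otimes>\<^sub>M MX)"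
    and dens_U: "cond_density M \<mu> A (MU \<Otimes>\<^sub>M MX) (\<lambda>\<omega>. (U \<omega>, X \<omega>)) fU"
    and dens_W: "cond_density M \<mu> A (MW \<Otimes>\<^sub>M MX) (\<lambda>\<omega>. (W \<omega>, X \<omega>)) fW"
    and NC4: "cond_indep M (gen M (MZ \<Otimes>\<^sub>M \<mu>) (\<lambda>\<omega>. (Z \<omega>, A \<omega>)))
                           (gen M (borel \<Otimes>\<^sub>M MW) (\<lambda>\<omega>. (Ya \<omega>, W \<omega>)))
                           (gen M (MU \<Otimes>\<^sub>M MX) (\<lambda>\<omega>. (U \<omega>, X \<omega>)))"
    and NC5: "\<forall>a x u. \<pi> a x \<noteq> 0 \<longrightarrow> fU a (u, x) \<noteq> 0"
    and HH'_L2: "\<forall>h\<in>HH'. L2fun M (MW \<Otimes>\<^sub>M \<mu> \<Otimes>\<^sub>M MX) (\<lambda>\<omega>. (W \<omega>, A \<omega>, X \<omega>)) (\<lambda>(w, a, x). h w a x)"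
    and HH'_T: "\<forall>h\<in>HH'. (AE \<omega> in M. integrable \<mu> (\<lambda>a. h (W \<omega>) a (X \<omega>) * \<pi> a (X \<omega>))) \<and>
                   integrable M (\<lambda>\<omega>. \<integral>a. \<bar>h (W \<omega>) a (X \<omega>) * \<pi> a (X \<omega>)\<bar> \<partial>\<mu>)"
    and QQ_L2: "\<forall>q\<in>QQ. L2fun M (MZ \<Otimes>\<^sub>M \<mu> \<Otimes>\<^sub>M MX) (\<lambda>\<omega>. (Z \<omega>, A \<omega>, X \<omega>)) (\<lambda>(z, a, x). \<pi> a x * q z a x)"
    and qhat: "qhat \<in> QQ \<and> (\<forall>q\<in>QQ.
       (SUP h\<in>HH'. ereal ((emp_mean D (\<lambda>(y, w, z, a, x).
             \<pi> a x * qhat z a x * h w a x - Top \<mu> \<pi> h w x))\<^sup>2))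
         \<le> (SUP h\<in>HH'. ereal ((emp_mean D (\<lambda>(y, w, z, a, x).
             \<pi> a x * q z a x * h w a x - Top \<mu> \<pi> h w x))\<^sup>2)))"
    and q0: "q0 \<in> QQ \<inter> Q0obs M MW MZ \<mu> MX \<pi> fW W Z A X"
    and proj: "\<forall>q\<in>QQ. \<exists>h\<in>HH'. AE \<omega> in M. h (W \<omega>) (A \<omega>) (X \<omega>) =
            condE M (MW \<Otimes>\<^sub>M \<mu> \<Otimes>\<^sub>M MX) (\<lambda>\<omega>. (W \<omega>, A \<omega>, X \<omega>))
              (\<lambda>\<omega>. \<pi> (A \<omega>) (X \<omega>) * q (Z \<omega>) (A \<omega>) (X \<omega>)
                    - \<pi> (A \<omega>) (X \<omega>) * q0 (Z \<omega>) (A \<omega>) (X \<omega>)) \<omega>"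
    and bdd: "bdd_above {\<bar>(\<integral>\<omega>. - q (Z \<omega>) (A \<omega>) (X \<omega>) * \<pi> (A \<omega>) (X \<omega>) * h (W \<omega>) (A \<omega>) (X \<omega>)
                          + Top \<mu> \<pi> h (W \<omega>) (X \<omega>) \<partial>M)
                   - emp_mean D (\<lambda>(y, w, z, a, x). - q z a x * \<pi> a x * h w a x + Top \<mu> \<pi> h w x)\<bar>
                  | q h. q \<in> QQ \<and> h \<in> HH'}"
  shows "l2norm M (condE M (MW \<Otimes>\<^sub>M \<mu> \<Otimes>\<^sub>M MX) (\<lambda>\<omega>. (W \<omega>, A \<omega>, X \<omega>))
              (\<lambda>\<omega>. \<pi> (A \<omega>) (X \<omega>) * qhat (Z \<omega>) (A \<omega>) (X \<omega>)
                    - \<pi> (A \<omega>) (X \<omega>) * q0 (Z \<omega>) (A \<omega>) (X \<omega>)))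
         \<le> 2 * sqrt (Sup {\<bar>(\<integral>\<omega>. - q (Z \<omega>) (A \<omega>) (X \<omega>) * \<pi> (A \<omega>) (X \<omega>) * h (W \<omega>) (A \<omega>) (X \<omega>)
                          + Top \<mu> \<pi> h (W \<omega>) (X \<omega>) \<partial>M)
                   - emp_mean D (\<lambda>(y, w, z, a, x). - q z a x * \<pi> a x * h w a x + Top \<mu> \<pi> h w x)\<bar>
                  | q h. q \<in> QQ \<and> h \<in> HH'})"
    (is "_ \<le> 2 * sqrt (Sup ?\<Delta>)")
proof -
  let ?V = "\<lambda>\<omega>. (W \<omega>, A \<omega>, X \<omega>)"
  let ?G = "gen M (MW \<Otimes>\<^sub>M \<mu> \<Otimes>\<^sub>M MX) ?V"
  have measV: "?V \<in> M \<rightarrow>\<^sub>M MW \<Otimes>\<^sub>M \<mu> \<Otimes>\<^sub>M MX" by measurable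
  have measZAX: "(\<lambda>\<omega>. (Z \<omega>, A \<omega>, X \<omega>)) \<in> M \<rightarrow>\<^sub>M MZ \<Otimes>\<^sub>M \<mu> \<Otimes>\<^sub>M MX" by measurable
  interpret G: sigma_finite_subalgebra M ?G by (rule sigma_finite_subalgebra_gen[OF M measV])
  define hV where "hV h = (\<lambda>\<omega>. h (W \<omega>) (A \<omega>) (X \<omega>))" for h :: "'w \<Rightarrow> 'a \<Rightarrow> 'x \<Rightarrow> real"
  define pqV where "pqV q = (\<lambda>\<omega>. \<pi> (A \<omega>) (X \<omega>) * q (Z \<omega>) (A \<omega>) (X \<omega>))" for q :: "'z \<Rightarrow> 'a \<Rightarrow> 'x \<Rightarrow> real"
  define e where "e h q = (\<integral>\<omega>. - q (Z \<omega>) (A \<omega>) (X \<omega>) * \<pi> (A \<omega>) (X \<omega>) * h (W \<omega>) (A \<omega>) (X \<omega>)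
                          + Top \<mu> \<pi> h (W \<omega>) (X \<omega>) \<partial>M)" for h q
  define n where "n h q = emp_mean D (\<lambda>(y, w, z, a, x). - q z a x * \<pi> a x * h w a x + Top \<mu> \<pi> h w x)" for h q
  have hL: "hV h \<in> borel_measurable ?G" "hV h \<in> borel_measurable M" "integrable M (\<lambda>\<omega>. (hV h \<omega>)\<^sup>2)"
    if "h \<in> HH'" for h
    using L2fun_comp[OF _ measV] HH'_L2 that unfolding hV_def by fastforce+
  have qL: "pqV q \<in> borel_measurable M" "integrable M (\<lambda>\<omega>. (pqV q \<omega>)\<^sup>2)" if "q \<in> QQ" for q
    using L2fun_comp(2,3)[OF _ measZAX] QQ_L2 that unfolding pqV_def by fastforce+
  have int: "integrable M (\<lambda>\<omega>. pqV q \<omega> * hV h \<omega>)" if "q \<in> QQ" "h \<in> HH'" for q h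
    using integrable_mult_of_square_integrable qL[OF that(1)] hL[OF that(2)] by blast
  have intT: "integrable M (\<lambda>\<omega>. Top \<mu> \<pi> h (W \<omega>) (X \<omega>))" if "h \<in> HH'" for h
    using integrable_Top[OF M mu measW measX measpi] HH'_L2 HH'_T that unfolding L2fun_def by blast
  have e_eq: "e h q = - (\<integral>\<omega>. pqV q \<omega> * hV h \<omega> \<partial>M) + (\<integral>\<omega>. Top \<mu> \<pi> h (W \<omega>) (X \<omega>) \<partial>M)"
    if "q \<in> QQ" "h \<in> HH'" for q h
    unfolding e_def using Bochner_Integration.integral_add[OF integrable_minus[OF int[OF that]] intT[OF that(2)]]
    by (simp add: pqV_def hV_def mult_ac)
  have A_FA: "A -` B \<inter> space M \<in> sets (gen M (MZ \<Otimes>\<^sub>M \<mu>) (\<lambda>\<omega>. (Z \<omega>, A \<omega>)))" if "B \<in> sets \<mu>" for B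
    by (rule vimage_snd_in_gen[OF _ that]) (use measurable_space[OF measZ] in blast)
  have W_FW: "W -` C \<inter> space M \<in> sets (gen M (borel \<Otimes>\<^sub>M MW) (\<lambda>\<omega>. (Ya \<omega>, W \<omega>)))" if "C \<in> sets MW" for C
    by (rule vimage_snd_in_gen[OF _ that]) simp
  have q0QQ: "q0 \<in> QQ" and qhatQQ: "qhat \<in> QQ" using q0 qhat by auto
  have moment: "e h q0 = 0" if "h \<in> HH'" for h
  proof -
    have "(\<integral>\<omega>. \<pi> (A \<omega>) (X \<omega>) * q0 (Z \<omega>) (A \<omega>) (X \<omega>) * h (W \<omega>) (A \<omega>) (X \<omega>) \<partial>M)
        = (\<integral>\<omega>. Top \<mu> \<pi> h (W \<omega>) (X \<omega>) \<partial>M)"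
      by (rule integral_obs_bridge_eq_Top[OF M mu measA measW measU measX measZ dens_U dens_W
            NC4 A_FA W_FW NC5 measpi _ _ HH'_T[rule_format, OF that]])
        (use q0 HH'_L2 that in blast)+
    then show ?thesis using e_eq[OF q0QQ that] by (simp add: pqV_def hV_def)
  qed
  obtain hs where hs: "hs \<in> HH'" and version: "AE \<omega> in M. hV hs \<omega> =
      real_cond_exp M ?G (\<lambda>\<omega>. pqV qhat \<omega> - pqV q0 \<omega>) \<omega>"
    using proj qhatQQ unfolding condE_def pqV_def hV_def by blast
  have "n h q = - emp_mean D (\<lambda>(y, w, z, a, x). \<pi> a x * q z a x * h w a x - Top \<mu> \<pi> h w x)" for h q
    unfolding n_def emp_mean_uminus[symmetric] by (simp add: case_prod_beta' algebra_simps)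
  then have "(SUP h\<in>HH'. ereal ((n h qhat)\<^sup>2)) \<le> (SUP h\<in>HH'. ereal ((n h q0)\<^sup>2))"
    using qhat q0QQ by simp
  moreover have "\<bar>e h q - n h q\<bar> \<in> ?\<Delta>" if "h \<in> HH'" "q \<in> QQ" for h q
    unfolding e_def n_def using that by blast
  ultimately have dev: "\<bar>e hs qhat\<bar> \<le> 2 * Sup ?\<Delta>"
    using minimax_deviation_bound[where e=e and n=n, OF bdd _ q0QQ qhatQQ hs moment] by blast
  have int_diff: "integrable M (\<lambda>\<omega>. hV hs \<omega> * (pqV qhat \<omega> - pqV q0 \<omega>))"
    using Bochner_Integration.integrable_diff[OF int[OF qhatQQ hs] int[OF q0QQ hs]]
    by (simp add: algebra_simps)
  have "(\<integral>\<omega>. hV hs \<omega> * (pqV qhat \<omega> - pqV q0 \<omega>) \<partial>M) = e hs q0 - e hs qhat"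
    unfolding e_eq[OF q0QQ hs] e_eq[OF qhatQQ hs]
    using Bochner_Integration.integral_diff[OF int[OF qhatQQ hs] int[OF q0QQ hs]]
    by (simp add: algebra_simps)
  also have "\<dots> \<le> 2 * Sup ?\<Delta>" using moment[OF hs] dev by linarith
  finally have "l2norm M (real_cond_exp M ?G (\<lambda>\<omega>. pqV qhat \<omega> - pqV q0 \<omega>)) \<le> 2 * sqrt (Sup ?\<Delta>)"
    by (intro G.l2norm_real_cond_exp_le[OF hL(1)[OF hs] _ int_diff version])
      (use qL[OF q0QQ] qL[OF qhatQQ] in auto)
  then show ?thesis by (simp add: condE_def pqV_def)
qed

theorem mainTheorem10:
  fixes M :: "'o measure" and \<mu> :: "'a measure"
    and MU :: "'u measure" and MW :: "'w measure" and MZ :: "'z measure" and MX :: "'x measure"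
    and Y :: "'o \<Rightarrow> real" and W :: "'o \<Rightarrow> 'w" and Z :: "'o \<Rightarrow> 'z" and A :: "'o \<Rightarrow> 'a"
    and X :: "'o \<Rightarrow> 'x" and U :: "'o \<Rightarrow> 'u"
    and Ya :: "'a \<Rightarrow> 'o \<Rightarrow> real" and Yaz :: "'a \<Rightarrow> 'z \<Rightarrow> 'o \<Rightarrow> real"
    and Waz :: "'a \<Rightarrow> 'z \<Rightarrow> 'o \<Rightarrow> 'w"
    and \<pi> :: "'a \<Rightarrow> 'x \<Rightarrow> real"
    and fU :: "'a \<Rightarrow> 'u \<times> 'x \<Rightarrow> real" and fW :: "'a \<Rightarrow> 'w \<times> 'x \<Rightarrow> real"
    and D :: "(real \<times> 'w \<times> 'z \<times> 'a \<times> 'x) list"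
    and HH :: "('w \<Rightarrow> 'a \<Rightarrow> 'x \<Rightarrow> real) set" and HH' :: "('w \<Rightarrow> 'a \<Rightarrow> 'x \<Rightarrow> real) set"
    and QQ :: "('z \<Rightarrow> 'a \<Rightarrow> 'x \<Rightarrow> real) set" and QQ' :: "('z \<Rightarrow> 'a \<Rightarrow> 'x \<Rightarrow> real) set"
    and hhat :: "'w \<Rightarrow> 'a \<Rightarrow> 'x \<Rightarrow> real" and qhat :: "'z \<Rightarrow> 'a \<Rightarrow> 'x \<Rightarrow> real"
  assumes M: "prob_space M" and mu: "sigma_finite_measure \<mu>"
    and measY: "Y \<in> borel_measurable M" and measW: "W \<in> M \<rightarrow>\<^sub>M MW"
    and measZ: "Z \<in> M \<rightarrow>\<^sub>M MZ" and measA: "A \<in> M \<rightarrow>\<^sub>M \<mu>"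
    and measX: "X \<in> M \<rightarrow>\<^sub>M MX" and measU: "U \<in> M \<rightarrow>\<^sub>M MU"
    and measYa: "\<forall>a. Ya a \<in> borel_measurable M"
    and measYaz: "\<forall>a z. Yaz a z \<in> borel_measurable M"
    and measWaz: "\<forall>a z. Waz a z \<in> M \<rightarrow>\<^sub>M MW"
    and measpi: "(\<lambda>(a, x). \<pi> a x) \<in> borel_measurable (\<mu> \<Otimes>\<^sub>M MX)"
    and dens_U: "cond_density M \<mu> A (MU \<Otimes>\<^sub>M MX) (\<lambda>\<omega>. (U \<omega>, X \<omega>)) fU"
    and dens_W: "cond_density M \<mu> A (MW \<Otimes>\<^sub>M MX) (\<lambda>\<omega>. (W \<omega>, X \<omega>)) fW"
    \<comment> \<open>Assumption (NC)\<close>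
    and NC1: "(AE \<omega> in M. Y \<omega> = Yaz (A \<omega>) (Z \<omega>) \<omega>) \<and> (AE \<omega> in M. W \<omega> = Waz (A \<omega>) (Z \<omega>) \<omega>)"
    and NC2: "\<forall>a z. AE \<omega> in M. Yaz a z \<omega> = Ya a \<omega>"
    and NC3: "\<forall>a z. AE \<omega> in M. Waz a z \<omega> = W \<omega>"
    and NC4: "\<forall>a. cond_indep M (gen M (MZ \<Otimes>\<^sub>M \<mu>) (\<lambda>\<omega>. (Z \<omega>, A \<omega>)))
                              (gen M (borel \<Otimes>\<^sub>M MW) (\<lambda>\<omega>. (Ya a \<omega>, W \<omega>)))
                              (gen M (MU \<Otimes>\<^sub>M MX) (\<lambda>\<omega>. (U \<omega>, X \<omega>)))"
    and NC5: "\<forall>a x u. \<pi> a x \<noteq> 0 \<longrightarrow> fU a (u, x) \<noteq> 0"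
    \<comment> \<open>Assumption (B)\<close>
    and B: "H0 M MW \<mu> MU MX Y W A U X \<noteq> {}" "Q0 M MZ \<mu> MU MX \<pi> fU Z A U X \<noteq> {}"
    \<comment> \<open>regularity of the outcome and of the function classes\<close>
    and Y_L2: "integrable M (\<lambda>\<omega>. (Y \<omega>)\<^sup>2)"
    and HH_L2: "\<forall>h\<in>HH. L2fun M (MW \<Otimes>\<^sub>M \<mu> \<Otimes>\<^sub>M MX) (\<lambda>\<omega>. (W \<omega>, A \<omega>, X \<omega>)) (\<lambda>(w, a, x). h w a x)"
    and HH'_L2: "\<forall>h\<in>HH'. L2fun M (MW \<Otimes>\<^sub>M \<mu> \<Otimes>\<^sub>M MX) (\<lambda>\<omega>. (W \<omega>, A \<omega>, X \<omega>)) (\<lambda>(w, a, x). h w a x)"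
    and HH'_T: "\<forall>h\<in>HH'. (AE \<omega> in M. integrable \<mu> (\<lambda>a. h (W \<omega>) a (X \<omega>) * \<pi> a (X \<omega>))) \<and>
                   integrable M (\<lambda>\<omega>. \<integral>a. \<bar>h (W \<omega>) a (X \<omega>) * \<pi> a (X \<omega>)\<bar> \<partial>\<mu>)"
    and QQ_L2: "\<forall>q\<in>QQ. L2fun M (MZ \<Otimes>\<^sub>M \<mu> \<Otimes>\<^sub>M MX) (\<lambda>\<omega>. (Z \<omega>, A \<omega>, X \<omega>)) (\<lambda>(z, a, x). \<pi> a x * q z a x)"
    and QQ'_L2: "\<forall>q\<in>QQ'. L2fun M (MZ \<Otimes>\<^sub>M \<mu> \<Otimes>\<^sub>M MX) (\<lambda>\<omega>. (Z \<omega>, A \<omega>, X \<omega>)) (\<lambda>(z, a, x). q z a x)"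
    \<comment> \<open>the sample and the estimators without stabilizers\<close>
    and D: "D \<noteq> []"
    and hhat: "hhat \<in> HH \<and> (\<forall>h\<in>HH.
       (SUP q\<in>QQ'. ereal ((emp_mean D (\<lambda>(y, w, z, a, x). q z a x * (hhat w a x - y)))\<^sup>2))
         \<le> (SUP q\<in>QQ'. ereal ((emp_mean D (\<lambda>(y, w, z, a, x). q z a x * (h w a x - y)))\<^sup>2)))"
    and qhat: "qhat \<in> QQ \<and> (\<forall>q\<in>QQ.
       (SUP h\<in>HH'. ereal ((emp_mean D (\<lambda>(y, w, z, a, x).
             \<pi> a x * qhat z a x * h w a x - Top \<mu> \<pi> h w x))\<^sup>2))
         \<le> (SUP h\<in>HH'. ereal ((emp_mean D (\<lambda>(y, w, z, a, x).
             \<pi> a x * q z a x * h w a x - Top \<mu> \<pi> h w x))\<^sup>2)))"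
  shows
   "(\<forall>h0. h0 \<in> HH \<inter> H0obs M MW MZ \<mu> MX Y W Z A X \<longrightarrow>
       (\<forall>h\<in>HH. \<exists>q\<in>QQ'. AE \<omega> in M. q (Z \<omega>) (A \<omega>) (X \<omega>) =
            condE M (MZ \<Otimes>\<^sub>M \<mu> \<Otimes>\<^sub>M MX) (\<lambda>\<omega>. (Z \<omega>, A \<omega>, X \<omega>))
              (\<lambda>\<omega>. h (W \<omega>) (A \<omega>) (X \<omega>) - h0 (W \<omega>) (A \<omega>) (X \<omega>)) \<omega>) \<longrightarrow>
       (\<forall>q\<in>QQ'. (\<lambda>z a x. - q z a x) \<in> QQ') \<longrightarrow>
       bdd_above {\<bar>(\<integral>\<omega>. (Y \<omega> - h (W \<omega>) (A \<omega>) (X \<omega>)) * q (Z \<omega>) (A \<omega>) (X \<omega>) \<partial>M)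
                   - emp_mean D (\<lambda>(y, w, z, a, x). (y - h w a x) * q z a x)\<bar> | q h. q \<in> QQ' \<and> h \<in> HH} \<longrightarrow>
       l2norm M (condE M (MZ \<Otimes>\<^sub>M \<mu> \<Otimes>\<^sub>M MX) (\<lambda>\<omega>. (Z \<omega>, A \<omega>, X \<omega>))
              (\<lambda>\<omega>. hhat (W \<omega>) (A \<omega>) (X \<omega>) - h0 (W \<omega>) (A \<omega>) (X \<omega>)))
         \<le> 2 * sqrt (Sup {\<bar>(\<integral>\<omega>. (Y \<omega> - h (W \<omega>) (A \<omega>) (X \<omega>)) * q (Z \<omega>) (A \<omega>) (X \<omega>) \<partial>M)
                   - emp_mean D (\<lambda>(y, w, z, a, x). (y - h w a x) * q z a x)\<bar> | q h. q \<in> QQ' \<and> h \<in> HH}))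
    \<and>
    (\<forall>q0. q0 \<in> QQ \<inter> Q0obs M MW MZ \<mu> MX \<pi> fW W Z A X \<longrightarrow>
       (\<forall>q\<in>QQ. \<exists>h\<in>HH'. AE \<omega> in M. h (W \<omega>) (A \<omega>) (X \<omega>) =
            condE M (MW \<Otimes>\<^sub>M \<mu> \<Otimes>\<^sub>M MX) (\<lambda>\<omega>. (W \<omega>, A \<omega>, X \<omega>))
              (\<lambda>\<omega>. \<pi> (A \<omega>) (X \<omega>) * q (Z \<omega>) (A \<omega>) (X \<omega>)
                    - \<pi> (A \<omega>) (X \<omega>) * q0 (Z \<omega>) (A \<omega>) (X \<omega>)) \<omega>) \<longrightarrow>
       (\<forall>h\<in>HH'. (\<lambda>w a x. - h w a x) \<in> HH') \<longrightarrow>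
       bdd_above {\<bar>(\<integral>\<omega>. - q (Z \<omega>) (A \<omega>) (X \<omega>) * \<pi> (A \<omega>) (X \<omega>) * h (W \<omega>) (A \<omega>) (X \<omega>)
                          + Top \<mu> \<pi> h (W \<omega>) (X \<omega>) \<partial>M)
                   - emp_mean D (\<lambda>(y, w, z, a, x). - q z a x * \<pi> a x * h w a x + Top \<mu> \<pi> h w x)\<bar>
                  | q h. q \<in> QQ \<and> h \<in> HH'} \<longrightarrow>
       l2norm M (condE M (MW \<Otimes>\<^sub>M \<mu> \<Otimes>\<^sub>M MX) (\<lambda>\<omega>. (W \<omega>, A \<omega>, X \<omega>))
              (\<lambda>\<omega>. \<pi> (A \<omega>) (X \<omega>) * qhat (Z \<omega>) (A \<omega>) (X \<omega>)
                    - \<pi> (A \<omega>) (X \<omega>) * q0 (Z \<omega>) (A \<omega>) (X \<omega>)))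
         \<le> 2 * sqrt (Sup {\<bar>(\<integral>\<omega>. - q (Z \<omega>) (A \<omega>) (X \<omega>) * \<pi> (A \<omega>) (X \<omega>) * h (W \<omega>) (A \<omega>) (X \<omega>)
                          + Top \<mu> \<pi> h (W \<omega>) (X \<omega>) \<partial>M)
                   - emp_mean D (\<lambda>(y, w, z, a, x). - q z a x * \<pi> a x * h w a x + Top \<mu> \<pi> h w x)\<bar>
                  | q h. q \<in> QQ \<and> h \<in> HH'}))"
  apply (intro conjI allI impI)
  subgoal premises prems for h0
    by (rule hhat_projected_error_bound[OF M measY measW measZ measA measX Y_L2 HH_L2 QQ'_L2 hhat
          prems(1,2,4)])
  subgoal premises prems for q0
    by (rule qhat_projected_error_bound[OF M mu measW measZ measA measX measU measpi dens_U dens_W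
          NC4[THEN spec] NC5 HH'_L2 HH'_T QQ_L2 qhat prems(1,2,4)])
  done

end
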